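(* Let $n\ge1$. A totally symmetric tensor field $X_{a_1\cdots a_n}=X_{(a_1\cdots a_n)}$ on $(M,g)$ is an affine tensor if and only if $$\nabla_r\nabla_sX_{a_1\cdots a_n}=\frac{2n}{n+1}R^p{}_{rs(a_1}X_{a_2\cdots a_n)p}+\frac{n(n-1)}{n+1}\Big(\nabla_{(a_1}\nabla_{a_2}X_{a_3\cdots a_n)sr}-\nabla_s\nabla_{(a_1}X_{a_2\cdots a_n)r}\Big)+\frac{n(n-1)}{n+1}\Big(R^p{}_{(a_1|sr|}X_{a_2\cdots a_n)p}-2R^p{}_{(a_1a_2|(r}X_{s)|a_3\cdots a_n)p}\Big),$$ where symmetrization written on $(a_1\cdots a_n)$ is over $a_1,\dots,a_n$ only, indices between vertical bars are exempt from it, and $(r\ldots s)$ in the last term denotes a separate symmetrization over $r,s$.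
   Context: $(M,g)$ is a smooth pseudo-Riemannian manifold with Levi-Civita connection $\nabla$; indices are raised and lowered with $g$. Parentheses around indices denote symmetrization with weight one. Curvature convention: for every covector field $\omega$, $\nabla_a\nabla_b\omega_c-\nabla_b\nabla_a\omega_c=R_{abc}{}^{d}\omega_d$, and $R^p{}_{abc}=g^{pq}R_{qabc}$. A totally symmetric tensor field $X_{a_1\cdots a_n}$ is an affine tensor if $\nabla_b\nabla_{(c}X_{a_1\cdots a_n)}=0$ (symmetrization over $c,a_1,\dots,a_n$). *)

theory Defs
  imports "HOL-Analysis.Analysis"
begin

text \<open>Local coordinate model of a pseudo-Riemannian manifold: an open set U of
  real^'n (a chart), indices ranging over the finite type 'n. Covariant tensor
  fields of rank k are functions from points to component functions on index lists
  of length k.\<close>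

definition pd :: "'n::finite \<Rightarrow> (real^'n \<Rightarrow> real) \<Rightarrow> real^'n \<Rightarrow> real" where
  "pd i f x = frechet_derivative f (at x) (axis i 1)"

fun iterpd :: "'n::finite list \<Rightarrow> (real^'n \<Rightarrow> real) \<Rightarrow> real^'n \<Rightarrow> real" where
  "iterpd [] f = f"
| "iterpd (i # is) f = pd i (iterpd is f)"

definition smooth_on_chart :: "(real^'n::finite) set \<Rightarrow> (real^'n \<Rightarrow> real) \<Rightarrow> bool" where
  "smooth_on_chart U f \<longleftrightarrow> (\<forall>is. \<forall>x\<in>U. iterpd is f differentiable (at x))"

definition metric_matrix :: "(real^'n::finite \<Rightarrow> 'n \<Rightarrow> 'n \<Rightarrow> real) \<Rightarrow> real^'n \<Rightarrow> real^'n^'n" where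
  "metric_matrix g x = (\<chi> a b. g x a b)"

definition pseudo_riemannian :: "(real^'n::finite) set \<Rightarrow> (real^'n \<Rightarrow> 'n \<Rightarrow> 'n \<Rightarrow> real) \<Rightarrow> bool" where
  "pseudo_riemannian U g \<longleftrightarrow> open U \<and>
     (\<forall>x\<in>U. \<forall>a b. g x a b = g x b a) \<and>
     (\<forall>x\<in>U. det (metric_matrix g x) \<noteq> 0) \<and>
     (\<forall>a b. smooth_on_chart U (\<lambda>y. g y a b))"

definition ginv :: "(real^'n::finite \<Rightarrow> 'n \<Rightarrow> 'n \<Rightarrow> real) \<Rightarrow> real^'n \<Rightarrow> 'n \<Rightarrow> 'n \<Rightarrow> real" where
  "ginv g x a b = matrix_inv (metric_matrix g x) $ a $ b"

text \<open>Christoffel symbols: Gamma g x c a b = Gamma^c_{ab}.\<close>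
definition Gamma :: "(real^'n::finite \<Rightarrow> 'n \<Rightarrow> 'n \<Rightarrow> real) \<Rightarrow> real^'n \<Rightarrow> 'n \<Rightarrow> 'n \<Rightarrow> 'n \<Rightarrow> real" where
  "Gamma g x c a b = (1/2) * (\<Sum>d\<in>UNIV. ginv g x c d *
      (pd a (\<lambda>y. g y d b) x + pd b (\<lambda>y. g y d a) x - pd d (\<lambda>y. g y a b) x))"

definition cov :: "(real^'n::finite \<Rightarrow> 'n \<Rightarrow> 'n \<Rightarrow> real) \<Rightarrow> (real^'n \<Rightarrow> 'n list \<Rightarrow> real)
    \<Rightarrow> real^'n \<Rightarrow> 'n list \<Rightarrow> real" where
  "cov g T x is = (case is of [] \<Rightarrow> 0
     | b # as \<Rightarrow> pd b (\<lambda>y. T y as) x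
          - (\<Sum>i<length as. \<Sum>p\<in>UNIV. Gamma g x p b (as ! i) * T x (as[i := p])))"

text \<open>Riemann tensor R_{abc}^d with the convention
  nabla_a nabla_b w_c - nabla_b nabla_a w_c = R_{abc}^d w_d:
  R_{abc}^d = d_b Gamma^d_{ac} - d_a Gamma^d_{bc} + Gamma^e_{ac} Gamma^d_{be} - Gamma^e_{bc} Gamma^d_{ae}.\<close>
definition Riem :: "(real^'n::finite \<Rightarrow> 'n \<Rightarrow> 'n \<Rightarrow> real) \<Rightarrow> real^'n \<Rightarrow> 'n \<Rightarrow> 'n \<Rightarrow> 'n \<Rightarrow> 'n \<Rightarrow> real" where
  "Riem g x a b c d = pd b (\<lambda>y. Gamma g y d a c) x - pd a (\<lambda>y. Gamma g y d b c) x
      + (\<Sum>e\<in>UNIV. Gamma g x e a c * Gamma g x d b e - Gamma g x e b c * Gamma g x d a e)"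

definition Rup :: "(real^'n::finite \<Rightarrow> 'n \<Rightarrow> 'n \<Rightarrow> real) \<Rightarrow> real^'n \<Rightarrow> 'n \<Rightarrow> 'n \<Rightarrow> 'n \<Rightarrow> 'n \<Rightarrow> real" where
  "Rup g x p a b c = (\<Sum>q\<in>UNIV. \<Sum>e\<in>UNIV. ginv g x p q * Riem g x q a b e * g x e c)"

definition perm_list :: "(nat \<Rightarrow> nat) \<Rightarrow> 'a list \<Rightarrow> 'a list" where
  "perm_list \<sigma> as = map (\<lambda>i. as ! \<sigma> i) [0..<length as]"

definition symm :: "('a list \<Rightarrow> real) \<Rightarrow> 'a list \<Rightarrow> real" where
  "symm F as = (\<Sum>\<sigma> \<in> {\<sigma>. \<sigma> permutes {..<length as}}. F (perm_list \<sigma> as)) / fact (length as)"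

definition totally_symmetric :: "(real^'n::finite) set \<Rightarrow> nat \<Rightarrow> (real^'n \<Rightarrow> 'n list \<Rightarrow> real) \<Rightarrow> bool" where
  "totally_symmetric U n X \<longleftrightarrow> (\<forall>x\<in>U. \<forall>as \<sigma>. length as = n \<longrightarrow> \<sigma> permutes {..<n} \<longrightarrow>
      X x (perm_list \<sigma> as) = X x as)"

definition affine_tensor :: "(real^'n::finite) set \<Rightarrow> (real^'n \<Rightarrow> 'n \<Rightarrow> 'n \<Rightarrow> real) \<Rightarrow> nat
    \<Rightarrow> (real^'n \<Rightarrow> 'n list \<Rightarrow> real) \<Rightarrow> bool" where
  "affine_tensor U g n X \<longleftrightarrow> (\<forall>x\<in>U. \<forall>b cs. length cs = n + 1 \<longrightarrow>
      symm (\<lambda>l. cov g (cov g X) x (b # l)) cs = 0)"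

end

theory Submission
  imports Defs
begin

text \<open>Affinity says that the full symmetrization of \<open>\<nabla>\<^sub>b\<nabla>\<^sub>c X\<^sub>a\<^sub>1\<^sub>\<dots>\<^sub>a\<^sub>n\<close> over \<open>c, a\<^sub>1, \<dots>, a\<^sub>n\<close>
  vanishes, i.e. \<open>\<nabla>\<^sub>b\<nabla>\<^sub>c X\<^sub>a\<^sub>\<dots> + n \<nabla>\<^sub>b\<nabla>\<^sub>(\<^sub>a\<^sub>1 X\<^sub>a\<^sub>2\<^sub>\<dots>\<^sub>)\<^sub>c = 0\<close>.  Writing this for the
  derivative pairs \<open>(r, s)\<close> and \<open>(s, r)\<close> and for \<open>(a\<^sub>1, r)\<close>, and commuting the two derivatives
  with the Ricci identity, every second derivative except \<open>\<nabla>\<^sub>r\<nabla>\<^sub>s X\<close> and the two displayed in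
  the formula cancels; the remaining curvature terms are brought into the stated shape with the
  first Bianchi identity and the pair symmetry \<open>R\<^sub>a\<^sub>b\<^sub>c\<^sub>d = R\<^sub>c\<^sub>d\<^sub>a\<^sub>b\<close>.  Conversely, symmetrizing the
  formula over \<open>s, a\<^sub>1, \<dots>, a\<^sub>n\<close>, the two second-derivative terms cancel each other and every
  curvature term vanishes by antisymmetry, which is affinity.\<close>

section \<open>Symmetrization\<close>

lemma perm_list_eq_permute_list: "perm_list = permute_list"
  by (auto simp: fun_eq_iff perm_list_def permute_list_def)

lemma symm_permute_list:
  "symm F as = (\<Sum>\<sigma>\<in>{\<sigma>. \<sigma> permutes {..<length as}}. F (permute_list \<sigma> as)) / fact (length as)"
  by (simp add: symm_def perm_list_eq_permute_list)

lemma totally_symmetric_mset_eq: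
  assumes "totally_symmetric U n X" "y \<in> U" "length L = n" "mset L = mset L'"
  shows "X y L = X y L'"
proof -
  obtain \<sigma> where \<sigma>: "\<sigma> permutes {..<length L'}" "permute_list \<sigma> L' = L"
    using mset_eq_permutation[OF assms(4)] by blast
  have "length L' = n" using assms by (metis mset_eq_length)
  then have "X y (perm_list \<sigma> L') = X y L'"
    using assms(1,2) \<sigma>(1) unfolding totally_symmetric_def by auto
  then show ?thesis using \<sigma>(2) by (simp add: perm_list_eq_permute_list)
qed

lemma symm_permute_argument:
  assumes "\<tau> permutes {..<length as}"
  shows "symm (\<lambda>l. F (permute_list \<tau> l)) as = symm F as"
proof -
  have "(\<Sum>\<sigma>\<in>{\<sigma>. \<sigma> permutes {..<length as}}. F (permute_list \<tau> (permute_list \<sigma> as)))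
       = (\<Sum>\<sigma>\<in>{\<sigma>. \<sigma> permutes {..<length as}}. F (permute_list (\<sigma> \<circ> \<tau>) as))"
    using assms by (simp add: permute_list_compose)
  also have "\<dots> = (\<Sum>\<sigma>\<in>{\<sigma>. \<sigma> permutes {..<length as}}. F (permute_list \<sigma> as))"
    using sum_permutations_compose_right[OF assms, of "\<lambda>\<sigma>. F (permute_list \<sigma> as)"] by simp
  finally show ?thesis by (simp add: symm_permute_list)
qed

lemma symm_cong:
  assumes "\<And>l. mset l = mset as \<Longrightarrow> F l = G l"
  shows "symm F as = symm G as"
  unfolding symm_permute_list
  by (rule arg_cong[where f="\<lambda>x. x / _"], rule sum.cong) (auto intro!: assms)

lemma symm_invariant:
  assumes "\<And>l. mset l = mset as \<Longrightarrow> F l = F as"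
  shows "symm F as = F as"
proof -
  have "symm F as = (\<Sum>\<sigma>\<in>{\<sigma>. \<sigma> permutes {..<length as}}. F as) / fact (length as)"
    unfolding symm_permute_list
    by (rule arg_cong[where f="\<lambda>x. x / _"], rule sum.cong) (auto intro!: assms)
  also have "\<dots> = F as"
    by (simp add: card_permutations)
  finally show ?thesis .
qed

lemma symm_add: "symm (\<lambda>l. F l + G l) as = symm F as + symm G as"
  by (simp add: symm_permute_list sum.distrib add_divide_distrib)

lemma symm_diff: "symm (\<lambda>l. F l - G l) as = symm F as - symm G as"
  by (simp add: symm_permute_list sum_subtractf diff_divide_distrib)

lemma symm_cmult: "symm (\<lambda>l. c * F l) as = c * symm F as"
  by (simp add: symm_permute_list sum_distrib_left)

lemma symm_minus: "symm (\<lambda>l. - F l) as = - symm F as"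
  by (simp add: symm_permute_list sum_negf)

lemma symm_sum: "symm (\<lambda>l. \<Sum>i\<in>I. F i l) as = (\<Sum>i\<in>I. symm (F i) as)"
  by (simp add: symm_permute_list sum_divide_distrib[symmetric] sum.swap[of _ I])

lemma symm_zero: "symm (\<lambda>l. 0) as = 0"
  by (simp add: symm_permute_list)

lemma symm_permute_eq:
  assumes \<tau>: "\<tau> permutes {..<length as}"
    and H: "\<And>l. length l = length as \<Longrightarrow> H l = F (permute_list \<tau> l)"
  shows "symm H as = symm F as"
proof -
  have "symm H as = symm (\<lambda>l. F (permute_list \<tau> l)) as"
    by (rule symm_cong) (rule H, rule mset_eq_length)
  also have "\<dots> = symm F as" by (rule symm_permute_argument[OF \<tau>])
  finally show ?thesis .
qed

definition symm_head :: "('a \<Rightarrow> 'a multiset \<Rightarrow> real) \<Rightarrow> 'a list \<Rightarrow> real" where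
  "symm_head G as = symm (\<lambda>l. G (l!0) (mset l - {#l!0#})) as"

definition symm_head2 :: "('a \<Rightarrow> 'a \<Rightarrow> 'a multiset \<Rightarrow> real) \<Rightarrow> 'a list \<Rightarrow> real" where
  "symm_head2 G as = symm (\<lambda>l. G (l!0) (l!1) (mset l - {#l!0, l!1#})) as"

lemma symm_head_add: "symm_head (\<lambda>a M. F a M + G a M) as = symm_head F as + symm_head G as"
  by (simp add: symm_head_def symm_add)

lemma symm_head_diff: "symm_head (\<lambda>a M. F a M - G a M) as = symm_head F as - symm_head G as"
  by (simp add: symm_head_def symm_diff)

lemma symm_head_cmult: "symm_head (\<lambda>a M. c * F a M) as = c * symm_head F as"
  by (simp add: symm_head_def symm_cmult)

lemma symm_head2_cmult: "symm_head2 (\<lambda>a b M. c * F a b M) as = c * symm_head2 F as"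
  by (simp add: symm_head2_def symm_cmult)

lemma symm_head2_cong:
  assumes "\<And>a b M. F a b M = G a b M"
  shows "symm_head2 F as = symm_head2 G as"
  by (simp add: symm_head2_def assms)

lemma symm_head_nth:
  assumes i: "i < length as"
  shows "symm (\<lambda>l. G (l!i) (mset l - {#l!i#})) as = symm_head G as"
  unfolding symm_head_def
proof (rule symm_permute_eq)
  let ?\<tau> = "Transposition.transpose 0 i"
  show \<tau>: "?\<tau> permutes {..<length as}"
    using i by (intro permutes_swap_id) auto
  fix l :: "'a list" assume len: "length l = length as"
  have \<tau>': "?\<tau> permutes {..<length l}" using \<tau> len by simp
  have p0: "permute_list ?\<tau> l ! 0 = l ! i"
    using i len by (subst permute_list_nth[OF \<tau>']) auto
  show "G (l ! i) (mset l - {#l ! i#}) =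
        G (permute_list ?\<tau> l ! 0) (mset (permute_list ?\<tau> l) - {#permute_list ?\<tau> l ! 0#})"
    using p0 by (simp add: mset_permute_list[OF \<tau>'])
qed

lemma symm_head2_nth:
  assumes i: "i < length as" and j: "j < length as" and ij: "i \<noteq> j"
  shows "symm (\<lambda>l. G (l!i) (l!j) (mset l - {#l!i, l!j#})) as = symm_head2 G as"
  unfolding symm_head2_def
proof (rule symm_permute_eq)
  define k where "k = Transposition.transpose 0 i j"
  let ?\<tau> = "Transposition.transpose 0 i \<circ> Transposition.transpose 1 k"
  have k: "k < length as" "k \<noteq> 0"
    using i j ij by (auto simp: k_def Transposition.transpose_def)
  have len2: "1 < length as" using i j ij by linarith
  show \<tau>: "?\<tau> permutes {..<length as}"
    using i k len2 by (intro permutes_compose permutes_swap_id) auto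
  fix l :: "'a list" assume len: "length l = length as"
  have \<tau>': "?\<tau> permutes {..<length l}" using \<tau> len by simp
  have p0: "permute_list ?\<tau> l ! 0 = l ! i"
    using len2 len k by (subst permute_list_nth[OF \<tau>']) (auto simp: Transposition.transpose_def)
  have p1: "permute_list ?\<tau> l ! 1 = l ! j"
    using len2 len k ij by (subst permute_list_nth[OF \<tau>']) (auto simp: Transposition.transpose_def k_def)
  show "G (l ! i) (l ! j) (mset l - {#l ! i, l ! j#}) =
        G (permute_list ?\<tau> l ! 0) (permute_list ?\<tau> l ! 1)
          (mset (permute_list ?\<tau> l) - {#permute_list ?\<tau> l ! 0, permute_list ?\<tau> l ! 1#})"
    unfolding mset_permute_list[OF \<tau>'] p0 p1 by simp
qed

lemma symm_head2_swap:
  assumes "length as \<ge> 2"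
  shows "symm_head2 (\<lambda>a b M. F b a M) as = symm_head2 F as"
proof -
  have "symm_head2 (\<lambda>a b M. F b a M) as = symm (\<lambda>l. F (l!1) (l!0) (mset l - {#l!1, l!0#})) as"
    by (simp add: symm_head2_def add_mset_commute)
  also have "\<dots> = symm_head2 F as"
    by (rule symm_head2_nth) (use assms in auto)
  finally show ?thesis .
qed

lemma sum_nth_eq_sum_mset: "(\<Sum>k<length l. \<psi> (l!k)) = sum_mset (image_mset \<psi> (mset l))"
proof -
  have "(\<Sum>k<length l. \<psi> (l!k)) = sum_list (map \<psi> l)"
    by (simp add: sum_list_sum_nth atLeast0LessThan)
  also have "\<dots> = sum_mset (image_mset \<psi> (mset l))"
    by (metis mset_map sum_mset_sum_list)
  finally show ?thesis .
qed

lemma symm_head_eq_average: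
  assumes "as \<noteq> []"
  shows "symm_head G as = (\<Sum>k<length as. G (as!k) (mset as - {#as!k#})) / length as"
proof -
  have "real (length as) * symm_head G as = (\<Sum>k<length as. symm_head G as)" by simp
  also have "\<dots> = (\<Sum>k<length as. symm (\<lambda>l. G (l!k) (mset l - {#l!k#})) as)"
    by (rule sum.cong) (auto simp: symm_head_nth)
  also have "\<dots> = symm (\<lambda>l. \<Sum>k<length as. G (l!k) (mset l - {#l!k#})) as"
    by (simp add: symm_sum)
  also have "\<dots> = (\<Sum>k<length as. G (as!k) (mset as - {#as!k#}))"
  proof (rule symm_invariant)
    fix l :: "'a list" assume m: "mset l = mset as"
    then have len: "length l = length as" by (rule mset_eq_length)
    let ?\<psi> = "\<lambda>a. G a (mset as - {#a#})"
    have "(\<Sum>k<length as. G (l!k) (mset l - {#l!k#})) = (\<Sum>k<length l. ?\<psi> (l!k))"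
      using m len by simp
    also have "\<dots> = (\<Sum>k<length as. ?\<psi> (as!k))"
      using sum_nth_eq_sum_mset[of ?\<psi> l] sum_nth_eq_sum_mset[of ?\<psi> as] m by simp
    finally show "(\<Sum>k<length as. G (l!k) (mset l - {#l!k#})) = (\<Sum>k<length as. G (as!k) (mset as - {#as!k#}))" .
  qed
  finally show ?thesis using assms by (simp add: field_simps)
qed

lemma permutes_shift_Suc:
  assumes "\<tau> permutes {..<m}"
  shows "(\<lambda>i. case i of 0 \<Rightarrow> 0 | Suc j \<Rightarrow> Suc (\<tau> j)) permutes {..<Suc m}"
  (is "?t permutes _")
proof (rule bij_imp_permutes)
  have injt: "inj \<tau>" by (rule permutes_inj[OF assms])
  have inj: "inj_on ?t {..<Suc m}"
  proof (rule inj_onI)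
    fix x y assume "?t x = ?t y"
    then show "x = y"
    proof (cases x; cases y)
      fix a b assume "x = Suc a" "y = Suc b" "?t x = ?t y"
      then have "\<tau> a = \<tau> b" by simp
      then show "x = y" using injt \<open>x = Suc a\<close> \<open>y = Suc b\<close> by (simp add: inj_eq)
    qed simp_all
  qed
  have sub: "?t ` {..<Suc m} \<subseteq> {..<Suc m}"
  proof
    fix z assume "z \<in> ?t ` {..<Suc m}"
    then obtain x where x: "x < Suc m" "z = ?t x" by auto
    show "z \<in> {..<Suc m}"
    proof (cases x)
      case 0 then show ?thesis using x by simp
    next
      case (Suc j)
      then have "j \<in> {..<m}" using x by simp
      then have "\<tau> j \<in> {..<m}" using permutes_in_image[OF assms] by blast
      then show ?thesis using x Suc by simp
    qed
  qed
  show "bij_betw ?t {..<Suc m} {..<Suc m}"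
    using endo_inj_surj[OF _ sub inj] inj by (simp add: bij_betw_def)
  fix x assume x: "x \<notin> {..<Suc m}"
  then obtain j where j: "x = Suc j" "j \<notin> {..<m}" by (cases x) auto
  then show "?t x = x" using permutes_not_in[OF assms j(2)] by simp
qed

lemma symm_symm_tl:
  assumes lc: "length c = Suc m"
  shows "symm (\<lambda>l. symm (\<phi> (hd l)) (tl l)) c = symm (\<lambda>l. \<phi> (hd l) (tl l)) c"
proof -
  let ?P = "{\<tau>. \<tau> permutes {..<m}}"
  have "symm (\<lambda>l. symm (\<phi> (hd l)) (tl l)) c
      = symm (\<lambda>l. (\<Sum>\<tau>\<in>?P. \<phi> (hd l) (permute_list \<tau> (tl l))) / fact m) c"
  proof (rule symm_cong)
    fix l :: "'a list" assume "mset l = mset c"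
    then have "length l = Suc m" using lc by (metis mset_eq_length)
    then show "symm (\<phi> (hd l)) (tl l) = (\<Sum>\<tau>\<in>?P. \<phi> (hd l) (permute_list \<tau> (tl l))) / fact m"
      by (simp add: symm_permute_list)
  qed
  also have "\<dots> = (\<Sum>\<tau>\<in>?P. symm (\<lambda>l. \<phi> (hd l) (permute_list \<tau> (tl l))) c) / fact m"
    by (simp add: symm_permute_list sum_divide_distrib[symmetric] sum.swap[of _ ?P])
  also have "\<dots> = (\<Sum>\<tau>\<in>?P. symm (\<lambda>l. \<phi> (hd l) (tl l)) c) / fact m"
  proof (rule arg_cong[where f="\<lambda>x. x / _"], rule sum.cong, simp)
    fix \<tau> assume "\<tau> \<in> ?P"
    then have \<tau>: "\<tau> permutes {..<m}" by simp
    let ?t = "\<lambda>i. case i of 0 \<Rightarrow> 0 | Suc j \<Rightarrow> Suc (\<tau> j)"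
    have t: "?t permutes {..<length c}" using permutes_shift_Suc[OF \<tau>] lc by simp
    show "symm (\<lambda>l. \<phi> (hd l) (permute_list \<tau> (tl l))) c = symm (\<lambda>l. \<phi> (hd l) (tl l)) c"
    proof (rule symm_permute_eq[OF t])
      fix l :: "'a list" assume len: "length l = length c"
      then obtain a L where l: "l = a # L" and lL: "length L = m" using lc by (cases l) auto
      have "permute_list ?t l = a # permute_list \<tau> L"
        using lL by (auto simp: l permute_list_def map_upt_Suc simp del: upt_Suc)
      then show "\<phi> (hd l) (permute_list \<tau> (tl l)) = \<phi> (hd (permute_list ?t l)) (tl (permute_list ?t l))"
        by (simp add: l)
    qed
  qed
  also have "\<dots> = symm (\<lambda>l. \<phi> (hd l) (tl l)) c"
    by (simp add: card_permutations)
  finally show ?thesis .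
qed

lemma Cons_Cons_of_length_ge_2: "length l \<ge> 2 \<Longrightarrow> \<exists>a a' L. l = a # a' # L"
  by (auto simp: Suc_le_length_iff numeral_2_eq_2)

lemma Cons_Cons_Cons_of_length_ge_3: "length l \<ge> 3 \<Longrightarrow> \<exists>a a' a'' L. l = a # a' # a'' # L"
  by (auto simp: Suc_le_length_iff numeral_3_eq_3)

lemma mset_drop2: "length l \<ge> 2 \<Longrightarrow> mset (drop 2 l) = mset l - {#l!0, l!Suc 0#}"
proof (cases l)
  case (Cons a l')
  assume "length l \<ge> 2"
  then show ?thesis using Cons by (cases l') auto
qed simp

lemma drop3_swap:
  assumes "length l \<ge> 3"
  shows "drop 3 (permute_list (Transposition.transpose 0 2) l) = drop 3 l"
proof -
  have \<tau>: "Transposition.transpose 0 2 permutes {..<length l}"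
    using assms by (intro permutes_swap_id) auto
  show ?thesis
    by (rule nth_equalityI) (auto simp: permute_list_nth[OF \<tau>] Transposition.transpose_def)
qed

section \<open>The algebraic identity at a point\<close>

text \<open>The right-hand side of the formula of the theorem, with \<open>T = \<nabla>\<nabla>X\<close>, \<open>Y = X\<close> and
  \<open>R p a b c = R\<^sup>p\<^sub>a\<^sub>b\<^sub>c\<close> evaluated at one point.\<close>

definition second_derivative_formula ::
    "nat \<Rightarrow> ('a list \<Rightarrow> real) \<Rightarrow> ('a list \<Rightarrow> real) \<Rightarrow> ('a \<Rightarrow> 'a \<Rightarrow> 'a \<Rightarrow> 'a \<Rightarrow> real)
      \<Rightarrow> 'a \<Rightarrow> 'a \<Rightarrow> 'a list \<Rightarrow> real" where
  "second_derivative_formula n T Y R r s as =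
        (2 * real n / (real n + 1)) *
          symm (\<lambda>l. \<Sum>p\<in>UNIV. R p r s (l ! 0) * Y (tl l @ [p])) as
      + (real n * (real n - 1) / (real n + 1)) *
          ( symm (\<lambda>l. T (l ! 0 # l ! 1 # drop 2 l @ [s, r])) as
          - symm (\<lambda>l. T (s # l ! 0 # tl l @ [r])) as )
      + (real n * (real n - 1) / (real n + 1)) *
          ( symm (\<lambda>l. \<Sum>p\<in>UNIV. R p (l ! 0) s r * Y (tl l @ [p])) as
          - 2 * symm (\<lambda>l. (1/2) * (\<Sum>p\<in>UNIV. R p (l ! 0) (l ! 1) r * Y (s # drop 2 l @ [p])
                                   + R p (l ! 0) (l ! 1) s * Y (r # drop 2 l @ [p]))) as )"

text \<open>At a point: \<open>t (a # b # L) = \<nabla>\<^sub>a\<nabla>\<^sub>b X\<^sub>L\<close>, \<open>Xl L = X\<^sub>L\<close>, \<open>Riem a b c d = R\<^sub>a\<^sub>b\<^sub>c\<^sup>d\<close>,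
  \<open>Rl a b c d = R\<^sub>a\<^sub>b\<^sub>c\<^sub>d\<close> and \<open>h\<close> is the inverse metric.\<close>

locale ricci_algebra =
  fixes n :: nat
    and t :: "'n::finite list \<Rightarrow> real"
    and Xl :: "'n list \<Rightarrow> real"
    and Riem :: "'n \<Rightarrow> 'n \<Rightarrow> 'n \<Rightarrow> 'n \<Rightarrow> real"
    and Rup :: "'n \<Rightarrow> 'n \<Rightarrow> 'n \<Rightarrow> 'n \<Rightarrow> real"
    and Rl :: "'n \<Rightarrow> 'n \<Rightarrow> 'n \<Rightarrow> 'n \<Rightarrow> real"
    and h :: "'n \<Rightarrow> 'n \<Rightarrow> real"
  assumes n_ge_1: "n \<ge> 1"
    and t_symmetric: "\<And>a b L L'. length L = n \<Longrightarrow> mset L = mset L' \<Longrightarrow> t (a#b#L) = t (a#b#L')"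
    and X_symmetric: "\<And>L L'. length L = n \<Longrightarrow> mset L = mset L' \<Longrightarrow> Xl L = Xl L'"
    and ricci_identity: "\<And>a b cs. length cs = n \<Longrightarrow>
       t (a#b#cs) - t (b#a#cs) = (\<Sum>i<n. \<Sum>d\<in>UNIV. Riem a b (cs!i) d * Xl (cs[i:=d]))"
    and Riem_Rl: "\<And>a b c d. Riem a b c d = (\<Sum>e\<in>UNIV. Rl a b c e * h e d)"
    and Rup_Rl: "\<And>p a b c. Rup p a b c = (\<Sum>q\<in>UNIV. h p q * Rl q a b c)"
    and h_symmetric: "\<And>a b. h a b = h b a"
    and Rl_antisym_left: "\<And>a b c d. Rl b a c d = - Rl a b c d"
    and Rl_antisym_right: "\<And>a b c d. Rl a b d c = - Rl a b c d"
    and Rl_bianchi: "\<And>a b c d. Rl a b c d + Rl b c a d + Rl c a b d = 0"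
begin

text \<open>Thanks to the symmetry of \<open>X\<close> and of the last \<open>n\<close> slots of \<open>t\<close>, these can be read off any
  list with the given multiset of indices.\<close>

definition tm :: "'n \<Rightarrow> 'n \<Rightarrow> 'n multiset \<Rightarrow> real" where
  "tm a b M = t (a # b # (SOME L. mset L = M))"

definition Xm :: "'n multiset \<Rightarrow> real" where
  "Xm M = Xl (SOME L. mset L = M)"

lemma t_tm: "length L = n \<Longrightarrow> t (a#b#L) = tm a b (mset L)"
  unfolding tm_def
  by (rule t_symmetric) (auto intro: someI[of "\<lambda>L'. mset L' = mset L" L, symmetric])

lemma X_Xm: "length L = n \<Longrightarrow> Xl L = Xm (mset L)"
  unfolding Xm_def
  by (rule X_symmetric) (auto intro: someI[of "\<lambda>L'. mset L' = mset L" L, symmetric])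

lemma Rl_pair_sym: "Rl a b c d = Rl c d a b"
proof -
  have B1: "Rl a b c d + Rl b c a d + Rl c a b d = 0" by (rule Rl_bianchi)
  have B2: "Rl b c d a + Rl c d b a + Rl d b c a = 0" by (rule Rl_bianchi)
  have B3: "Rl c d a b + Rl d a c b + Rl a c d b = 0" by (rule Rl_bianchi)
  have B4: "Rl d a b c + Rl a b d c + Rl b d a c = 0" by (rule Rl_bianchi)
  show ?thesis
    using B1 B2 B3 B4 Rl_antisym_right[of b c a d] Rl_antisym_left[of c a d b] Rl_antisym_right[of c a b d] Rl_antisym_right[of c d b a]
      Rl_antisym_left[of d b a c] Rl_antisym_right[of d b c a] Rl_antisym_right[of d a c b] Rl_antisym_right[of a b c d]
    by linarith
qed

lemma Riem_contract: "(\<Sum>d\<in>UNIV. Riem a b c d * Y d) = (\<Sum>e\<in>UNIV. Rl a b c e * (\<Sum>d\<in>UNIV. h e d * Y d))"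
proof -
  have "(\<Sum>d\<in>UNIV. Riem a b c d * Y d) = (\<Sum>d\<in>UNIV. \<Sum>e\<in>UNIV. Rl a b c e * h e d * Y d)"
    by (simp add: Riem_Rl sum_distrib_right)
  also have "\<dots> = (\<Sum>e\<in>UNIV. \<Sum>d\<in>UNIV. Rl a b c e * h e d * Y d)"
    by (rule sum.swap)
  also have "\<dots> = (\<Sum>e\<in>UNIV. Rl a b c e * (\<Sum>d\<in>UNIV. h e d * Y d))"
    by (simp add: sum_distrib_left mult.assoc)
  finally show ?thesis .
qed

lemma Rup_contract: "(\<Sum>p\<in>UNIV. Rup p a b c * Y p) = (\<Sum>e\<in>UNIV. Rl e a b c * (\<Sum>d\<in>UNIV. h e d * Y d))"
proof -
  have "(\<Sum>p\<in>UNIV. Rup p a b c * Y p) = (\<Sum>p\<in>UNIV. \<Sum>e\<in>UNIV. h e p * Rl e a b c * Y p)"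
    by (simp add: Rup_Rl sum_distrib_right h_symmetric)
  also have "\<dots> = (\<Sum>e\<in>UNIV. \<Sum>p\<in>UNIV. h e p * Rl e a b c * Y p)"
    by (rule sum.swap)
  also have "\<dots> = (\<Sum>e\<in>UNIV. Rl e a b c * (\<Sum>d\<in>UNIV. h e d * Y d))"
    by (simp add: sum_distrib_left mult.commute mult.left_commute)
  finally show ?thesis .
qed



definition RiemX :: "'n \<Rightarrow> 'n \<Rightarrow> 'n \<Rightarrow> 'n multiset \<Rightarrow> real" where
  "RiemX a b c M = (\<Sum>d\<in>UNIV. Riem a b c d * Xm (add_mset d M))"

definition RupX :: "'n \<Rightarrow> 'n \<Rightarrow> 'n \<Rightarrow> 'n multiset \<Rightarrow> real" where
  "RupX a b c M = (\<Sum>p\<in>UNIV. Rup p a b c * Xm (add_mset p M))"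

lemma affine_sum_eq_zero:
  assumes aff: "symm (\<lambda>l. t (b#l)) c = 0" and lc: "length c = Suc n"
  shows "(\<Sum>k<Suc n. tm b (c!k) (mset c - {#c!k#})) = 0"
proof -
  have "symm (\<lambda>l. t (b#l)) c = symm_head (\<lambda>a M. tm b a M) c"
    unfolding symm_head_def
  proof (rule symm_cong)
    fix l :: "'n list" assume "mset l = mset c"
    then have "length l = Suc n" using lc by (metis mset_eq_length)
    then obtain a L where l: "l = a # L" and L: "length L = n" by (cases l) auto
    show "t (b # l) = tm b (l ! 0) (mset l - {#l ! 0#})"
      using t_tm[OF L] by (simp add: l)
  qed
  also have "\<dots> = (\<Sum>k<Suc n. tm b (c!k) (mset c - {#c!k#})) / Suc n"
    using symm_head_eq_average[of c "tm b"] lc by (cases c) (simp_all del: sum.lessThan_Suc)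
  finally show ?thesis using aff by simp
qed

lemma affine_first_index:
  assumes aff: "\<forall>b c. length c = Suc n \<longrightarrow> symm (\<lambda>l. t (b#l)) c = 0"
    and las: "length as = n"
  shows "t (r#s#as) + real n * symm_head (\<lambda>a M. tm r a (add_mset s M)) as = 0"
proof -
  have "(\<Sum>k<Suc n. tm r ((s#as)!k) (mset (s#as) - {#(s#as)!k#})) = 0"
    by (rule affine_sum_eq_zero) (use aff las in auto)
  then have "tm r s (mset as) + (\<Sum>k<n. tm r (as!k) (add_mset s (mset as) - {#as!k#})) = 0"
    by (simp del: sum.lessThan_Suc add: sum.lessThan_Suc_shift)
  moreover have "(\<Sum>k<n. tm r (as!k) (add_mset s (mset as) - {#as!k#}))
      = (\<Sum>k<n. tm r (as!k) (add_mset s (mset as - {#as!k#})))"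
    by (rule sum.cong) (auto simp: diff_union_swap2 las)
  moreover have "symm_head (\<lambda>a M. tm r a (add_mset s M)) as
      = (\<Sum>k<n. tm r (as!k) (add_mset s (mset as - {#as!k#}))) / n"
    using symm_head_eq_average[of as "\<lambda>a M. tm r a (add_mset s M)"] las n_ge_1 by (cases as) auto
  ultimately show ?thesis using t_tm[OF las] n_ge_1 by simp
qed

lemma affine_inner_indices:
  assumes aff: "\<forall>b c. length c = Suc n \<longrightarrow> symm (\<lambda>l. t (b#l)) c = 0"
    and las: "length as = n"
  shows "symm_head (\<lambda>a M. tm a r (add_mset s M)) as + symm_head (\<lambda>a M. tm a s (add_mset r M)) as
     + (real n - 1) * symm_head2 (\<lambda>a b M. tm a b (add_mset s (add_mset r M))) as = 0"
proof -
  obtain m where nm: "n = Suc m" using n_ge_1 by (cases n) auto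
  define Z where "Z l = tm (l!0) r (add_mset s (mset l - {#l!0#})) + tm (l!0) s (add_mset r (mset l - {#l!0#}))
     + (\<Sum>j<m. tm (l!0) (l!Suc j) (add_mset s (add_mset r (mset l - {#l!0, l!Suc j#}))))" for l
  have Z0: "Z l = 0" if ll: "length l = n" for l
  proof -
    obtain a L where l: "l = a # L" and L: "length L = m" using ll nm by (cases l) auto
    have "(\<Sum>k<Suc n. tm a ((r#s#L)!k) (mset (r#s#L) - {#(r#s#L)!k#})) = 0"
      by (rule affine_sum_eq_zero) (use aff L nm in auto)
    then have "tm a r (add_mset s (mset L)) + tm a s (add_mset r (mset L))
        + (\<Sum>j<m. tm a (L!j) (add_mset r (add_mset s (mset L)) - {#L!j#})) = 0"
      by (simp del: sum.lessThan_Suc add: sum.lessThan_Suc_shift nm add_mset_commute)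
    moreover have "(\<Sum>j<m. tm a (L!j) (add_mset r (add_mset s (mset L)) - {#L!j#}))
       = (\<Sum>j<m. tm a (L!j) (add_mset s (add_mset r (mset L - {#L!j#}))))"
      by (rule sum.cong) (auto simp: diff_union_swap2 L add_mset_commute)
    ultimately show ?thesis by (simp add: Z_def l)
  qed
  have "symm Z as = 0"
  proof -
    have "symm Z as = symm (\<lambda>l. 0) as"
      by (rule symm_cong) (use Z0 las in \<open>metis mset_eq_length\<close>)
    then show ?thesis by (simp add: symm_zero)
  qed
  moreover have "symm Z as = symm_head (\<lambda>a M. tm a r (add_mset s M)) as + symm_head (\<lambda>a M. tm a s (add_mset r M)) as
     + (\<Sum>j<m. symm (\<lambda>l. tm (l!0) (l!Suc j) (add_mset s (add_mset r (mset l - {#l!0, l!Suc j#})))) as)"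
    unfolding Z_def by (simp add: symm_add symm_sum symm_head_def)
  moreover have "(\<Sum>j<m. symm (\<lambda>l. tm (l!0) (l!Suc j) (add_mset s (add_mset r (mset l - {#l!0, l!Suc j#})))) as)
     = (\<Sum>j<m. symm_head2 (\<lambda>a b M. tm a b (add_mset s (add_mset r M))) as)"
    using las nm by (intro sum.cong refl symm_head2_nth) auto
  ultimately show ?thesis using nm by simp
qed

lemma commutator_symm_head:
  assumes las: "length as = n"
  shows "t (r#s#as) - t (s#r#as) = real n * symm_head (RiemX r s) as"
proof -
  have "t (r#s#as) - t (s#r#as) = (\<Sum>i<n. \<Sum>d\<in>UNIV. Riem r s (as!i) d * Xl (as[i:=d]))"
    by (rule ricci_identity[OF las])
  also have "\<dots> = (\<Sum>i<n. \<Sum>d\<in>UNIV. Riem r s (as!i) d * Xm (add_mset d (mset as - {#as!i#})))"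
    by (intro sum.cong refl) (simp add: X_Xm las mset_update)
  also have "\<dots> = real n * symm_head (RiemX r s) as"
    using symm_head_eq_average[of as "RiemX r s"] las n_ge_1 by (cases as) (auto simp: RiemX_def)
  finally show ?thesis .
qed

lemma ricci_identity_Cons:
  assumes nL: "n = Suc (length L)"
  shows "t (r # a # s # L) - t (a # r # s # L)
    = RiemX r a s (mset L) + (\<Sum>j<length L. RiemX r a (L!j) (add_mset s (mset L - {#L!j#})))"
proof -
  have sL: "length (s # L) = n" using nL by simp
  have "t (r # a # s # L) - t (a # r # s # L) = (\<Sum>i<n. \<Sum>d\<in>UNIV. Riem r a ((s#L)!i) d * Xl ((s#L)[i:=d]))"
    by (rule ricci_identity[OF sL])
  also have "\<dots> = (\<Sum>d\<in>UNIV. Riem r a s d * Xl (d#L))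
      + (\<Sum>j<length L. \<Sum>d\<in>UNIV. Riem r a (L!j) d * Xl (s # L[j:=d]))"
    by (simp del: sum.lessThan_Suc add: nL sum.lessThan_Suc_shift)
  also have "(\<Sum>d\<in>UNIV. Riem r a s d * Xl (d#L)) = RiemX r a s (mset L)"
    using X_Xm[of "_ # L"] nL by (simp add: RiemX_def)
  also have "(\<Sum>j<length L. \<Sum>d\<in>UNIV. Riem r a (L!j) d * Xl (s # L[j:=d]))
      = (\<Sum>j<length L. RiemX r a (L!j) (add_mset s (mset L - {#L!j#})))"
    unfolding RiemX_def
  proof (intro sum.cong refl)
    fix j d assume j: "j \<in> {..<length L}"
    have "length (s # L[j:=d]) = n" using nL by simp
    then show "Riem r a (L!j) d * Xl (s # L[j:=d])
        = Riem r a (L!j) d * Xm (add_mset d (add_mset s (mset L - {#L!j#})))"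
      using X_Xm j by (simp add: mset_update add_mset_commute)
  qed
  finally show ?thesis .
qed

lemma commutator_swap_symm_head:
  assumes las: "length as = n"
  shows "symm_head (\<lambda>a M. tm r a (add_mset s M)) as - symm_head (\<lambda>a M. tm a r (add_mset s M)) as
    = symm_head (\<lambda>a. RiemX r a s) as
      + (real n - 1) * symm_head2 (\<lambda>a b M. RiemX r a b (add_mset s M)) as"
proof -
  obtain m where nm: "n = Suc m" using n_ge_1 by (cases n) auto
  let ?K = "\<lambda>a b M. RiemX r a b (add_mset s M)"
  have "symm_head (\<lambda>a M. tm r a (add_mset s M)) as - symm_head (\<lambda>a M. tm a r (add_mset s M)) as
     = symm (\<lambda>l. tm r (l!0) (add_mset s (mset l - {#l!0#})) - tm (l!0) r (add_mset s (mset l - {#l!0#}))) as"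
    by (simp add: symm_head_def symm_diff)
  also have "\<dots> = symm (\<lambda>l. RiemX r (l!0) s (mset l - {#l!0#})
      + (\<Sum>j<m. ?K (l!0) (l!Suc j) (mset l - {#l!0, l!Suc j#}))) as"
  proof (rule symm_cong)
    fix l :: "'n list" assume "mset l = mset as"
    then have "length l = n" using las by (metis mset_eq_length)
    then obtain a L where l: "l = a # L" and L: "length L = m" using nm by (cases l) auto
    have sL: "length (s#L) = n" using L nm by simp
    show "tm r (l!0) (add_mset s (mset l - {#l!0#})) - tm (l!0) r (add_mset s (mset l - {#l!0#}))
       = RiemX r (l!0) s (mset l - {#l!0#}) + (\<Sum>j<m. ?K (l!0) (l!Suc j) (mset l - {#l!0, l!Suc j#}))"
      using ricci_identity_Cons[of L r a s] t_tm[OF sL, of r a] t_tm[OF sL, of a r] L nm by (simp add: l)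
  qed
  also have "\<dots> = symm_head (\<lambda>a. RiemX r a s) as + (\<Sum>j<m. symm_head2 ?K as)"
  proof -
    have "(\<Sum>j<m. symm (\<lambda>l. ?K (l!0) (l!Suc j) (mset l - {#l!0, l!Suc j#})) as) = (\<Sum>j<m. symm_head2 ?K as)"
      using las nm by (intro sum.cong refl symm_head2_nth) auto
    then show ?thesis by (simp add: symm_add symm_sum symm_head_def)
  qed
  finally show ?thesis using nm by simp
qed

lemma Riem_combination_contract:
  "real n * (\<Sum>d\<in>UNIV. Riem r s a d * Y d) - (\<Sum>d\<in>UNIV. Riem r a s d * Y d) - (\<Sum>d\<in>UNIV. Riem s a r d * Y d)
   = 2 * (\<Sum>p\<in>UNIV. Rup p r s a * Y p) + (real n - 1) * (\<Sum>p\<in>UNIV. Rup p a s r * Y p)"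
proof -
  define Z where "Z e = (\<Sum>d\<in>UNIV. h e d * Y d)" for e
  have co: "real n * Rl r s a e - Rl r a s e - Rl s a r e = 2 * Rl e r s a + (real n - 1) * Rl e a s r" for e
  proof -
    have i1: "Rl e r s a = - Rl s a r e" using Rl_pair_sym[of e r s a] Rl_antisym_right[of s a r e] by simp
    have i2: "Rl e a s r = Rl r s a e"
      using Rl_pair_sym[of e a s r] Rl_antisym_left[of r s e a] Rl_antisym_right[of r s a e] by simp
    have i3: "Rl r a s e = Rl r s a e + Rl s a r e"
      using Rl_bianchi[of r s a e] Rl_antisym_left[of r a s e] by simp
    show ?thesis by (simp add: i1 i2 i3 algebra_simps)
  qed
  have "real n * (\<Sum>d\<in>UNIV. Riem r s a d * Y d) - (\<Sum>d\<in>UNIV. Riem r a s d * Y d) - (\<Sum>d\<in>UNIV. Riem s a r d * Y d)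
      = real n * (\<Sum>e\<in>UNIV. Rl r s a e * Z e) - (\<Sum>e\<in>UNIV. Rl r a s e * Z e) - (\<Sum>e\<in>UNIV. Rl s a r e * Z e)"
    by (simp add: Riem_contract Z_def)
  also have "\<dots> = (\<Sum>e\<in>UNIV. (real n * Rl r s a e - Rl r a s e - Rl s a r e) * Z e)"
    by (simp add: algebra_simps sum_subtractf sum_distrib_left sum.distrib)
  also have "\<dots> = (\<Sum>e\<in>UNIV. (2 * Rl e r s a + (real n - 1) * Rl e a s r) * Z e)"
    by (simp add: co)
  also have "\<dots> = 2 * (\<Sum>e\<in>UNIV. Rl e r s a * Z e) + (real n - 1) * (\<Sum>e\<in>UNIV. Rl e a s r * Z e)"
    by (simp add: distrib_right sum.distrib sum_distrib_left mult.assoc)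
  also have "\<dots> = 2 * (\<Sum>p\<in>UNIV. Rup p r s a * Y p) + (real n - 1) * (\<Sum>p\<in>UNIV. Rup p a s r * Y p)"
    by (simp add: Rup_contract Z_def)
  finally show ?thesis .
qed

lemma Riem_contract_eq_Rup: "(\<Sum>d\<in>UNIV. Riem r a b d * Y d) = (\<Sum>p\<in>UNIV. Rup p b a r * Y p)"
proof -
  have co: "Rl r a b e = Rl e b a r" for e
    using Rl_pair_sym[of r a b e] Rl_antisym_left[of e b r a] Rl_antisym_right[of e b a r] by simp
  show ?thesis by (simp add: Riem_contract Rup_contract co)
qed

lemma Rup_antisym: "Rup p a c b = - Rup p a b c"
  by (simp add: Rup_Rl Rl_antisym_right[of _ a c b] sum_negf)

lemma X_tl: "length l = n \<Longrightarrow> Xl (tl l @ [p]) = Xm (add_mset p (mset l - {#l!0#}))"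
  using n_ge_1 by (cases l) (auto simp: X_Xm)

lemma t_tl: "length l = n \<Longrightarrow> t (s # l!0 # tl l @ [r]) = tm s (l!0) (add_mset r (mset l - {#l!0#}))"
  using n_ge_1 by (cases l) (auto simp: t_tm)

lemma t_drop2: "length l = n \<Longrightarrow> n \<ge> 2 \<Longrightarrow>
   t (l!0 # l!Suc 0 # drop 2 l @ [s, r]) = tm (l!0) (l!Suc 0) (add_mset s (add_mset r (mset l - {#l!0, l!Suc 0#})))"
  by (simp add: t_tm mset_drop2 add_mset_commute)

lemma X_drop2: "length l = n \<Longrightarrow> n \<ge> 2 \<Longrightarrow>
   Xl (s # drop 2 l @ [p]) = Xm (add_mset s (add_mset p (mset l - {#l!0, l!Suc 0#})))"
  by (simp add: X_Xm mset_drop2 add_mset_commute)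

lemma symm_head_curvature:
  "real n * symm_head (RiemX r s) as - symm_head (\<lambda>a. RiemX r a s) as - symm_head (\<lambda>a. RiemX s a r) as
   = 2 * symm_head (RupX r s) as + (real n - 1) * symm_head (\<lambda>a. RupX a s r) as"
proof -
  have "real n * symm_head (RiemX r s) as - symm_head (\<lambda>a. RiemX r a s) as - symm_head (\<lambda>a. RiemX s a r) as
      = symm_head (\<lambda>a M. real n * RiemX r s a M - RiemX r a s M - RiemX s a r M) as"
    by (simp add: symm_head_diff symm_head_cmult)
  also have "\<dots> = symm_head (\<lambda>a M. 2 * RupX r s a M + (real n - 1) * RupX a s r M) as"
    by (simp add: RiemX_def RupX_def Riem_combination_contract)
  also have "\<dots> = 2 * symm_head (RupX r s) as + (real n - 1) * symm_head (\<lambda>a. RupX a s r) as"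
    by (simp add: symm_head_add symm_head_cmult)
  finally show ?thesis .
qed

lemma symm_head2_curvature:
  assumes "length as \<ge> 2"
  shows "symm_head2 (\<lambda>a b M. RiemX r a b (add_mset s M)) as = symm_head2 (\<lambda>a b M. RupX a b r (add_mset s M)) as"
proof -
  have "symm_head2 (\<lambda>a b M. RiemX r a b (add_mset s M)) as = symm_head2 (\<lambda>a b M. RupX b a r (add_mset s M)) as"
    by (simp add: RiemX_def RupX_def Riem_contract_eq_Rup)
  also have "\<dots> = symm_head2 (\<lambda>a b M. RupX a b r (add_mset s M)) as"
    by (rule symm_head2_swap[OF assms])
  finally show ?thesis .
qed

text \<open>The affinity relations for the derivative pairs \<open>(r, s)\<close>, \<open>(s, r)\<close> and \<open>(a\<^sub>1, r)\<close>, the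
  Ricci identity and the curvature identities above combine into the theorem's formula, cleared
  of denominators.\<close>

lemma affine_identity:
  assumes aff: "\<forall>b c. length c = Suc n \<longrightarrow> symm (\<lambda>l. t (b#l)) c = 0"
    and las: "length as = n"
  shows "(real n + 1) * t (r#s#as) = 2 * real n * symm_head (RupX r s) as
     + real n * (real n - 1) * (symm_head2 (\<lambda>a b M. tm a b (add_mset s (add_mset r M))) as
                                - symm_head (\<lambda>a M. tm s a (add_mset r M)) as)
     + real n * (real n - 1) * (symm_head (\<lambda>a. RupX a s r) as
                                - symm_head2 (\<lambda>a b M. RupX a b r (add_mset s M)) as
                                - symm_head2 (\<lambda>a b M. RupX a b s (add_mset r M)) as)"
proof -
  note rs = affine_first_index[OF aff las, of r s] and sr = affine_first_index[OF aff las, of s r]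
    and inner = affine_inner_indices[OF aff las, of r s]
    and comm = commutator_symm_head[OF las, of r s]
    and swap_rs = commutator_swap_symm_head[OF las, of r s]
    and swap_sr = commutator_swap_symm_head[OF las, of s r]
    and curv = symm_head_curvature[of r s as]
  have curv2: "(real n - 1) * (symm_head2 (\<lambda>a b M. RiemX r a b (add_mset s M)) as
                             + symm_head2 (\<lambda>a b M. RiemX s a b (add_mset r M)) as)
    = (real n - 1) * (symm_head2 (\<lambda>a b M. RupX a b r (add_mset s M)) as
                    + symm_head2 (\<lambda>a b M. RupX a b s (add_mset r M)) as)"
  proof (cases "n = 1")
    case False
    then have "length as \<ge> 2" using n_ge_1 las by simp
    then show ?thesis by (simp add: symm_head2_curvature)
  qed simp
  show ?thesis
    using rs sr inner comm swap_rs swap_sr curv curv2 by algebra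
qed

lemma second_derivative_formula_symm_head:
  assumes las: "length as = n"
  shows "second_derivative_formula n t Xl Rup r s as =
     (2 * real n / (real n + 1)) * symm_head (RupX r s) as
     + (real n * (real n - 1) / (real n + 1)) *
         (symm_head2 (\<lambda>a b M. tm a b (add_mset s (add_mset r M))) as
          - symm_head (\<lambda>a M. tm s a (add_mset r M)) as)
     + (real n * (real n - 1) / (real n + 1)) *
         (symm_head (\<lambda>a. RupX a s r) as
          - symm_head2 (\<lambda>a b M. RupX a b r (add_mset s M)) as
          - symm_head2 (\<lambda>a b M. RupX a b s (add_mset r M)) as)"
proof -
  have lengths: "mset l = mset as \<Longrightarrow> length l = n" for l :: "'n list"
    using las by (metis mset_eq_length)
  have first: "symm (\<lambda>l. \<Sum>p\<in>UNIV. Rup p r s (l ! 0) * Xl (tl l @ [p])) as = symm_head (RupX r s) as"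
    unfolding symm_head_def RupX_def by (rule symm_cong) (simp add: X_tl lengths)
  have second: "symm (\<lambda>l. \<Sum>p\<in>UNIV. Rup p (l ! 0) s r * Xl (tl l @ [p])) as = symm_head (\<lambda>a. RupX a s r) as"
    unfolding symm_head_def RupX_def by (rule symm_cong) (simp add: X_tl lengths)
  have third: "symm (\<lambda>l. t (s # l ! 0 # tl l @ [r])) as = symm_head (\<lambda>a M. tm s a (add_mset r M)) as"
    unfolding symm_head_def by (rule symm_cong) (simp add: t_tl lengths)
  show ?thesis
  proof (cases "n = 1")
    case True
    then show ?thesis by (simp add: second_derivative_formula_def first)
  next
    case False
    then have n2: "n \<ge> 2" using n_ge_1 by simp
    have fourth: "symm (\<lambda>l. t (l ! 0 # l ! 1 # drop 2 l @ [s, r])) as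
        = symm_head2 (\<lambda>a b M. tm a b (add_mset s (add_mset r M))) as"
      unfolding symm_head2_def by (rule symm_cong) (simp add: t_drop2 lengths n2)
    have "symm (\<lambda>l. (1/2) * (\<Sum>p\<in>UNIV. Rup p (l ! 0) (l ! 1) r * Xl (s # drop 2 l @ [p])
                                   + Rup p (l ! 0) (l ! 1) s * Xl (r # drop 2 l @ [p]))) as
        = symm (\<lambda>l. (1/2) * (RupX (l!0) (l!1) r (add_mset s (mset l - {#l!0, l!1#}))
                             + RupX (l!0) (l!1) s (add_mset r (mset l - {#l!0, l!1#})))) as"
      by (rule symm_cong) (simp add: RupX_def X_drop2 lengths n2 sum.distrib add_mset_commute)
    then have fifth: "2 * symm (\<lambda>l. (1/2) * (\<Sum>p\<in>UNIV. Rup p (l ! 0) (l ! 1) r * Xl (s # drop 2 l @ [p])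
                                   + Rup p (l ! 0) (l ! 1) s * Xl (r # drop 2 l @ [p]))) as
        = symm_head2 (\<lambda>a b M. RupX a b r (add_mset s M)) as + symm_head2 (\<lambda>a b M. RupX a b s (add_mset r M)) as"
      unfolding symm_head2_def symm_cmult symm_add by simp
    show ?thesis
      unfolding second_derivative_formula_def first second third fourth fifth
      by (simp add: algebra_simps)
  qed
qed

theorem affine_imp_second_derivative_formula:
  assumes aff: "\<forall>b c. length c = Suc n \<longrightarrow> symm (\<lambda>l. t (b#l)) c = 0"
    and las: "length as = n"
  shows "t (r # s # as) = second_derivative_formula n t Xl Rup r s as"
proof -
  have cancel: "(real n + 1) * (x / (real n + 1) * y) = x * y" for x y
    by (simp add: add_pos_nonneg)
  have "(real n + 1) * second_derivative_formula n t Xl Rup r s as = (real n + 1) * t (r # s # as)"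
    unfolding affine_identity[OF aff las] second_derivative_formula_symm_head[OF las] distrib_left cancel ..
  then show ?thesis by simp
qed

lemma symm_Rup_antisym_zero:
  assumes lc: "length c = Suc n"
  shows "symm (\<lambda>l. \<Sum>p\<in>UNIV. Rup p b (hd l) (tl l ! 0) * Xl (tl (tl l) @ [p])) c = 0"
proof -
  have c2: "length c \<ge> 2" using lc n_ge_1 by simp
  have head2: "symm (\<lambda>l. \<Sum>p\<in>UNIV. Rup p b (hd l) (tl l ! 0) * Xl (tl (tl l) @ [p])) c = symm_head2 (RupX b) c"
    unfolding symm_head2_def
  proof (rule symm_cong)
    fix l :: "'n list" assume "mset l = mset c"
    then have ll: "length l = Suc n" using lc by (metis mset_eq_length)
    then obtain a a' L where l: "l = a # a' # L" using Cons_Cons_of_length_ge_2[of l] n_ge_1 by auto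
    have L: "length (L @ [p]) = n" for p using ll l by simp
    show "(\<Sum>p\<in>UNIV. Rup p b (hd l) (tl l ! 0) * Xl (tl (tl l) @ [p])) =
        RupX b (l ! 0) (l ! 1) (mset l - {#l ! 0, l ! 1#})"
      using X_Xm[OF L] by (simp add: l RupX_def)
  qed
  have "symm_head2 (RupX b) c = symm_head2 (\<lambda>a a' M. RupX b a' a M) c"
    by (rule symm_head2_swap[OF c2, symmetric])
  also have "\<dots> = symm_head2 (\<lambda>a a' M. (-1) * RupX b a a' M) c"
  proof (rule symm_head2_cong)
    fix a a' M
    show "RupX b a' a M = (-1) * RupX b a a' M"
      by (simp add: RupX_def Rup_antisym[of _ b a' a] sum_negf)
  qed
  also have "\<dots> = - symm_head2 (RupX b) c"
    by (simp only: symm_head2_cmult)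
  finally show ?thesis using head2 by simp
qed

lemma symm_shift_indices:
  assumes lc: "length c = Suc n" and n2: "n \<ge> 2"
  shows "symm (\<lambda>l. t (tl l ! 0 # tl l ! 1 # drop 2 (tl l) @ [hd l, b])) c
       = symm (\<lambda>l. t (hd l # tl l ! 0 # tl (tl l) @ [b])) c"
proof -
  let ?G = "\<lambda>a a' M. tm a a' (add_mset b M)"
  have "symm (\<lambda>l. t (tl l ! 0 # tl l ! 1 # drop 2 (tl l) @ [hd l, b])) c
      = symm (\<lambda>l. ?G (l!1) (l!2) (mset l - {#l!1, l!2#})) c"
  proof (rule symm_cong)
    fix l :: "'n list" assume "mset l = mset c"
    then have ll: "length l = Suc n" using lc by (metis mset_eq_length)
    then obtain a a' a'' L where l: "l = a # a' # a'' # L" using Cons_Cons_Cons_of_length_ge_3[of l] n2 by auto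
    have L: "length (L @ [a, b]) = n" using ll l by simp
    show "t (tl l ! 0 # tl l ! 1 # drop 2 (tl l) @ [hd l, b]) = ?G (l!1) (l!2) (mset l - {#l!1, l!2#})"
      using t_tm[OF L, of a' a''] by (simp add: l add_mset_commute numeral_2_eq_2)
  qed
  also have "\<dots> = symm_head2 ?G c" by (rule symm_head2_nth) (use lc n2 in auto)
  also have "\<dots> = symm (\<lambda>l. t (hd l # tl l ! 0 # tl (tl l) @ [b])) c"
    unfolding symm_head2_def
  proof (rule symm_cong)
    fix l :: "'n list" assume "mset l = mset c"
    then have ll: "length l = Suc n" using lc by (metis mset_eq_length)
    then obtain a a' L where l: "l = a # a' # L" using Cons_Cons_of_length_ge_2[of l] n2 by auto
    have L: "length (L @ [b]) = n" using ll l by simp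
    show "?G (l!0) (l!1) (mset l - {#l!0, l!1#}) = t (hd l # tl l ! 0 # tl (tl l) @ [b])"
      using t_tm[OF L, of a a'] by (simp add: l)
  qed
  finally show ?thesis .
qed

lemma symm_Rup_swap_zero:
  assumes c3: "length c \<ge> 3"
  shows "symm (\<lambda>l. \<Sum>p\<in>UNIV. Rup p (l!1) (l!2) (l!0) * Xl (b # drop 3 l @ [p])) c = 0"
  (is "symm ?W c = 0")
proof -
  let ?\<tau> = "Transposition.transpose 0 (2::nat)"
  have \<tau>: "?\<tau> permutes {..<length c}" using c3 by (intro permutes_swap_id) auto
  have "symm (\<lambda>l. - ?W l) c = symm ?W c"
  proof (rule symm_permute_eq[OF \<tau>])
    fix l :: "'n list" assume ll: "length l = length c"
    have \<tau>': "?\<tau> permutes {..<length l}" using \<tau> ll by simp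
    have p0: "permute_list ?\<tau> l ! 0 = l ! 2" using ll c3 by (subst permute_list_nth[OF \<tau>']) auto
    have p1: "permute_list ?\<tau> l ! 1 = l ! 1" using ll c3 by (subst permute_list_nth[OF \<tau>']) auto
    have p2: "permute_list ?\<tau> l ! 2 = l ! 0" using ll c3 by (subst permute_list_nth[OF \<tau>']) auto
    have d3: "drop 3 (permute_list ?\<tau> l) = drop 3 l" by (rule drop3_swap) (use ll c3 in simp)
    show "- ?W l = ?W (permute_list ?\<tau> l)"
      unfolding p0 p1 p2 d3
      by (simp add: Rup_antisym[of _ "l!Suc 0" "l!0" "l!2"] sum_negf)
  qed
  then show ?thesis by (simp add: symm_minus)
qed

lemma symm_Rup_pair:
  assumes lc: "length c = Suc n" and n2: "n \<ge> 2"
  shows "symm (\<lambda>l. \<Sum>p\<in>UNIV. Rup p (tl l ! 0) (hd l) b * Xl (tl (tl l) @ [p])) c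
       = 2 * symm (\<lambda>l. 1/2 * (\<Sum>p\<in>UNIV. Rup p (tl l ! 0) (tl l ! 1) b * Xl (hd l # drop 2 (tl l) @ [p])
                                 + Rup p (tl l ! 0) (tl l ! 1) (hd l) * Xl (b # drop 2 (tl l) @ [p]))) c"
proof -
  let ?H = "\<lambda>a a'. RupX a a' b"
  define W where "W l = (\<Sum>p\<in>UNIV. Rup p (l!1) (l!2) (l!0) * Xl (b # drop 3 l @ [p]))" for l
  have c3: "length c \<ge> 3" using lc n2 by simp
  have "symm (\<lambda>l. \<Sum>p\<in>UNIV. Rup p (tl l ! 0) (hd l) b * Xl (tl (tl l) @ [p])) c
      = symm (\<lambda>l. ?H (l!1) (l!0) (mset l - {#l!1, l!0#})) c"
  proof (rule symm_cong)
    fix l :: "'n list" assume "mset l = mset c"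
    then have ll: "length l = Suc n" using lc by (metis mset_eq_length)
    then obtain a a' L where l: "l = a # a' # L" using Cons_Cons_of_length_ge_2[of l] n2 by auto
    have L: "length (L @ [p]) = n" for p using ll l by simp
    show "(\<Sum>p\<in>UNIV. Rup p (tl l ! 0) (hd l) b * Xl (tl (tl l) @ [p])) = ?H (l!1) (l!0) (mset l - {#l!1, l!0#})"
      using X_Xm[OF L] by (simp add: l RupX_def)
  qed
  also have "\<dots> = symm_head2 ?H c" by (rule symm_head2_nth) (use lc n2 in auto)
  finally have first: "symm (\<lambda>l. \<Sum>p\<in>UNIV. Rup p (tl l ! 0) (hd l) b * Xl (tl (tl l) @ [p])) c = symm_head2 ?H c" .
  have "symm (\<lambda>l. 1/2 * (\<Sum>p\<in>UNIV. Rup p (tl l ! 0) (tl l ! 1) b * Xl (hd l # drop 2 (tl l) @ [p])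
                                 + Rup p (tl l ! 0) (tl l ! 1) (hd l) * Xl (b # drop 2 (tl l) @ [p]))) c
     = symm (\<lambda>l. 1/2 * (?H (l!1) (l!2) (mset l - {#l!1, l!2#}) + W l)) c"
  proof (rule symm_cong)
    fix l :: "'n list" assume "mset l = mset c"
    then have ll: "length l = Suc n" using lc by (metis mset_eq_length)
    then obtain a a' a'' L where l: "l = a # a' # a'' # L" using Cons_Cons_Cons_of_length_ge_3[of l] n2 by auto
    have L: "length (a # L @ [p]) = n" for p using ll l by simp
    show "1/2 * (\<Sum>p\<in>UNIV. Rup p (tl l ! 0) (tl l ! 1) b * Xl (hd l # drop 2 (tl l) @ [p])
                                 + Rup p (tl l ! 0) (tl l ! 1) (hd l) * Xl (b # drop 2 (tl l) @ [p]))
        = 1/2 * (?H (l!1) (l!2) (mset l - {#l!1, l!2#}) + W l)"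
      using X_Xm[OF L] by (simp add: l W_def RupX_def numeral_2_eq_2 numeral_3_eq_3 sum.distrib add_mset_commute)
  qed
  also have "\<dots> = 1/2 * (symm (\<lambda>l. ?H (l!1) (l!2) (mset l - {#l!1, l!2#})) c + symm W c)"
    by (simp only: symm_cmult symm_add)
  also have "symm (\<lambda>l. ?H (l!1) (l!2) (mset l - {#l!1, l!2#})) c = symm_head2 ?H c"
    by (rule symm_head2_nth) (use lc n2 in auto)
  also have "symm W c = 0"
    unfolding W_def by (rule symm_Rup_swap_zero[OF c3])
  finally show ?thesis using first by simp
qed


theorem second_derivative_formula_imp_affine:
  assumes formula: "\<forall>r s as. length as = n \<longrightarrow> t (r # s # as) = second_derivative_formula n t Xl Rup r s as"
    and lc: "length c = Suc n"
  shows "symm (\<lambda>l. t (b#l)) c = 0"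
proof -
  define \<alpha> where "\<alpha> = 2 * real n / (real n + 1)"
  define \<beta> where "\<beta> = real n * (real n - 1) / (real n + 1)"
  define f1 where "f1 s as = (\<Sum>p\<in>UNIV. Rup p b s (as ! 0) * Xl (tl as @ [p]))" for s as
  define f2 where "f2 s as = t (as ! 0 # as ! 1 # drop 2 as @ [s, b])" for s as
  define f3 where "f3 s as = t (s # as ! 0 # tl as @ [b])" for s as
  define f4 where "f4 s as = (\<Sum>p\<in>UNIV. Rup p (as ! 0) s b * Xl (tl as @ [p]))" for s as
  define f5 where "f5 s as = (1/2) * (\<Sum>p\<in>UNIV. Rup p (as ! 0) (as ! 1) b * Xl (s # drop 2 as @ [p])
                                   + Rup p (as ! 0) (as ! 1) s * Xl (b # drop 2 as @ [p]))" for s as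
  have nest: "symm (\<lambda>l. symm (\<phi> (hd l)) (tl l)) c = symm (\<lambda>l. \<phi> (hd l) (tl l)) c"
    for \<phi> :: "'n \<Rightarrow> 'n list \<Rightarrow> real"
    by (rule symm_symm_tl[OF lc])
  have "symm (\<lambda>l. t (b#l)) c = symm (\<lambda>l. \<alpha> * symm (f1 (hd l)) (tl l)
        + \<beta> * (symm (f2 (hd l)) (tl l) - symm (f3 (hd l)) (tl l))
        + \<beta> * (symm (f4 (hd l)) (tl l) - 2 * symm (f5 (hd l)) (tl l))) c"
  proof (rule symm_cong)
    fix l :: "'n list" assume "mset l = mset c"
    then have "length l = Suc n" using lc by (metis mset_eq_length)
    then obtain a L where l: "l = a # L" and L: "length L = n" by (cases l) auto
    show "t (b#l) = \<alpha> * symm (f1 (hd l)) (tl l)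
        + \<beta> * (symm (f2 (hd l)) (tl l) - symm (f3 (hd l)) (tl l))
        + \<beta> * (symm (f4 (hd l)) (tl l) - 2 * symm (f5 (hd l)) (tl l))"
      using formula L
      unfolding l \<alpha>_def \<beta>_def f1_def f2_def f3_def f4_def f5_def second_derivative_formula_def
      by simp
  qed
  also have "\<dots> = \<alpha> * symm (\<lambda>l. f1 (hd l) (tl l)) c
        + \<beta> * (symm (\<lambda>l. f2 (hd l) (tl l)) c - symm (\<lambda>l. f3 (hd l) (tl l)) c)
        + \<beta> * (symm (\<lambda>l. f4 (hd l) (tl l)) c - 2 * symm (\<lambda>l. f5 (hd l) (tl l)) c)"
    by (simp only: symm_add symm_diff symm_cmult nest)
  also have "symm (\<lambda>l. f1 (hd l) (tl l)) c = 0"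
    unfolding f1_def by (rule symm_Rup_antisym_zero[OF lc])
  also have "\<beta> * (symm (\<lambda>l. f2 (hd l) (tl l)) c - symm (\<lambda>l. f3 (hd l) (tl l)) c) = 0"
  proof (cases "n = 1")
    case False
    then have "n \<ge> 2" using n_ge_1 by simp
    then show ?thesis unfolding f2_def f3_def using symm_shift_indices[OF lc] by simp
  qed (simp add: \<beta>_def)
  also have "\<beta> * (symm (\<lambda>l. f4 (hd l) (tl l)) c - 2 * symm (\<lambda>l. f5 (hd l) (tl l)) c) = 0"
  proof (cases "n = 1")
    case False
    then have "n \<ge> 2" using n_ge_1 by simp
    then show ?thesis unfolding f4_def f5_def using symm_Rup_pair[OF lc] by simp
  qed (simp add: \<beta>_def)
  finally show ?thesis by simp
qed

end

section \<open>Partial derivatives\<close>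

lemma pd_cong_open:
  assumes "open S" "x \<in> S" "\<And>y. y \<in> S \<Longrightarrow> f y = h y"
  shows "pd i f x = pd i h x"
proof -
  have "(f has_derivative D) (at x) \<longleftrightarrow> (h has_derivative D) (at x)" for D
    using has_derivative_transform_within_open[of f D x UNIV S h]
      has_derivative_transform_within_open[of h D x UNIV S f] assms by auto
  then have "frechet_derivative f (at x) = frechet_derivative h (at x)"
    unfolding frechet_derivative_def by simp
  then show ?thesis by (simp add: pd_def)
qed

lemma differentiable_cong_open:
  assumes "open S" "x \<in> S" "\<And>y. y \<in> S \<Longrightarrow> f y = h y" "f differentiable (at x)"
  shows "h differentiable (at x)"
  using assms has_derivative_transform_within_open[of f _ x UNIV S h]
  unfolding differentiable_def by blast

lemma pd_has_derivative: "(f has_derivative D) (at x) \<Longrightarrow> pd i f x = D (axis i 1)"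
  by (simp add: pd_def frechet_derivative_at[symmetric])

lemma has_derivative_frechet_derivative: "f differentiable (at x) \<Longrightarrow> (f has_derivative (\<lambda>v. frechet_derivative f (at x) v)) (at x)"
  using frechet_derivative_works by (metis eta_contract_eq)

lemma pd_diff:
  assumes df: "f differentiable (at x)" and dh: "h differentiable (at x)"
  shows "pd i (\<lambda>y. f y - h y) x = pd i f x - pd i h x"
proof -
  note pd_has_derivative[OF has_derivative_diff[OF has_derivative_frechet_derivative[OF df] has_derivative_frechet_derivative[OF dh]], of i]
  then show ?thesis by (simp add: pd_def)
qed

lemma pd_mult:
  assumes df: "f differentiable (at x)" and dh: "h differentiable (at x)"
  shows "pd i (\<lambda>y. f y * h y) x = f x * pd i h x + pd i f x * h x"
proof -
  note pd_has_derivative[OF has_derivative_mult[OF has_derivative_frechet_derivative[OF df] has_derivative_frechet_derivative[OF dh]], of i]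
  then show ?thesis by (simp add: pd_def)
qed

lemma pd_const: "pd i (\<lambda>y. c) x = 0"
  by (rule pd_has_derivative[OF has_derivative_const])

lemma pd_sum: "finite A \<Longrightarrow> (\<And>a. a \<in> A \<Longrightarrow> f a differentiable (at x)) \<Longrightarrow>
    pd i (\<lambda>y. \<Sum>a\<in>A. f a y) x = (\<Sum>a\<in>A. pd i (f a) x)"
proof -
  assume fin: "finite A" and d: "\<And>a. a \<in> A \<Longrightarrow> f a differentiable (at x)"
  have "((\<lambda>y. \<Sum>a\<in>A. f a y) has_derivative (\<lambda>v. \<Sum>a\<in>A. frechet_derivative (f a) (at x) v)) (at x)"
    by (rule has_derivative_sum) (use d has_derivative_frechet_derivative in auto)
  note pd_has_derivative[OF this, of i]
  then show ?thesis by (simp add: pd_def)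
qed

lemma differentiable_prod: "finite A \<Longrightarrow> (\<And>a. a \<in> A \<Longrightarrow> (f a :: real^'n::finite \<Rightarrow> real) differentiable (at x)) \<Longrightarrow>
    (\<lambda>y. \<Prod>a\<in>A. f a y) differentiable (at x)"
  by (induction A rule: finite_induct) (auto intro!: differentiable_mult)

lemma iterpd_append: "iterpd (is @ js) f = iterpd is (iterpd js f)"
  by (induction "is") auto

lemma smooth_on_chart_pd: "smooth_on_chart U f \<Longrightarrow> smooth_on_chart U (pd i f)"
  unfolding smooth_on_chart_def
proof (intro allI ballI)
  fix "is" x assume s: "\<forall>is. \<forall>x\<in>U. iterpd is f differentiable at x" and x: "x \<in> U"
  have "iterpd is (pd i f) = iterpd (is @ [i]) f" by (simp add: iterpd_append)
  then show "iterpd is (pd i f) differentiable at x" using s x by metis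
qed

lemma smooth_on_chart_differentiable: "smooth_on_chart U f \<Longrightarrow> x \<in> U \<Longrightarrow> f differentiable (at x)"
  unfolding smooth_on_chart_def by (metis iterpd.simps(1))


lemma has_real_derivative_along_line:
  assumes "f differentiable (at (c + s *\<^sub>R u))"
  shows "((\<lambda>s. f (c + s *\<^sub>R u)) has_real_derivative frechet_derivative f (at (c + s *\<^sub>R u)) u) (at s)"
proof -
  let ?D = "frechet_derivative f (at (c + s *\<^sub>R u))"
  have Df: "(f has_derivative ?D) (at (c + s *\<^sub>R u))" using assms frechet_derivative_works by blast
  have l: "((\<lambda>s. c + s *\<^sub>R u) has_derivative (\<lambda>t. t *\<^sub>R u)) (at s)"
    by (auto intro!: derivative_eq_intros)
  have "((\<lambda>s. f (c + s *\<^sub>R u)) has_derivative (\<lambda>t. ?D (t *\<^sub>R u))) (at s)"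
    using has_derivative_compose[OF l Df] by simp
  moreover have "(\<lambda>t. ?D (t *\<^sub>R u)) = (\<lambda>t. ?D u * t)"
    using linear_cmul[OF has_derivative_linear[OF Df]] by (auto simp: fun_eq_iff)
  ultimately show ?thesis by (simp add: has_field_derivative_def)
qed

lemma pd_along_axis:
  assumes "f differentiable (at (c + s *\<^sub>R axis a 1))"
  shows "((\<lambda>s. f (c + s *\<^sub>R axis a 1)) has_real_derivative pd a f (c + s *\<^sub>R axis a 1)) (at s)"
  using has_real_derivative_along_line[OF assms] by (simp add: pd_def)

lemma dist_add_axes:
  fixes x :: "real^'n::finite"
  assumes "0 \<le> s" "0 \<le> t"
  shows "dist (x + s *\<^sub>R axis a 1 + t *\<^sub>R axis b 1) x \<le> s + t"
proof -
  have "norm (s *\<^sub>R (axis a 1 :: real^'n) + t *\<^sub>R axis b 1)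
      \<le> norm (s *\<^sub>R (axis a 1 :: real^'n)) + norm (t *\<^sub>R (axis b 1 :: real^'n))"
    by (rule norm_triangle_ineq)
  then show ?thesis using assms by (simp add: dist_norm add.assoc)
qed

lemma second_difference_mean_value:
  fixes f :: "real^'n::finite \<Rightarrow> real"
  assumes bU: "ball x \<epsilon> \<subseteq> U" and sm: "smooth_on_chart U f" and h: "0 < h" "2*h < \<epsilon>"
  shows "\<exists>\<xi> \<eta>. 0 < \<xi> \<and> \<xi> < h \<and> 0 < \<eta> \<and> \<eta> < h \<and>
    f (x + h *\<^sub>R axis a 1 + h *\<^sub>R axis b 1) - f (x + h *\<^sub>R axis a 1) - f (x + h *\<^sub>R axis b 1) + f x
      = h * (h * pd b (pd a f) (x + \<xi> *\<^sub>R axis a 1 + \<eta> *\<^sub>R axis b 1))"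
proof -
  define ua where "ua = (axis a 1 :: real^'n)"
  define ub where "ub = (axis b 1 :: real^'n)"
  have inU: "x + s *\<^sub>R ua + t *\<^sub>R ub \<in> U" if "0 \<le> s" "s \<le> h" "0 \<le> t" "t \<le> h" for s t
  proof -
    have "dist (x + s *\<^sub>R ua + t *\<^sub>R ub) x < \<epsilon>"
      using dist_add_axes[of s t x a b] that h by (simp add: ua_def ub_def)
    then show ?thesis using bU by (auto simp: dist_commute)
  qed
  have df: "f differentiable (at y)" if "y \<in> U" for y using smooth_on_chart_differentiable[OF sm that] .
  have dpa: "pd a f differentiable (at y)" if "y \<in> U" for y using smooth_on_chart_differentiable[OF smooth_on_chart_pd[OF sm] that] .
  define \<phi> where "\<phi> s = f ((x + h *\<^sub>R ub) + s *\<^sub>R ua) - f (x + s *\<^sub>R ua)" for s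
  define \<phi>' where "\<phi>' s = pd a f ((x + h *\<^sub>R ub) + s *\<^sub>R ua) - pd a f (x + s *\<^sub>R ua)" for s
  have "(\<phi> has_real_derivative \<phi>' s) (at s)" if "0 \<le> s" "s \<le> h" for s
  proof -
    have p1: "(x + h *\<^sub>R ub) + s *\<^sub>R ua \<in> U" using inU[of s h] that h by (simp add: add_ac)
    have p2: "x + s *\<^sub>R ua \<in> U" using inU[of s 0] that h by simp
    show ?thesis unfolding \<phi>_def \<phi>'_def ua_def
      by (intro DERIV_diff pd_along_axis df) (use p1 p2 in \<open>simp_all add: ua_def\<close>)
  qed
  then obtain \<xi> where \<xi>: "0 < \<xi>" "\<xi> < h" "\<phi> h - \<phi> 0 = (h - 0) * \<phi>' \<xi>"
    using MVT2[of 0 h \<phi> \<phi>'] h by auto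
  define \<psi> where "\<psi> t = pd a f ((x + \<xi> *\<^sub>R ua) + t *\<^sub>R ub)" for t
  have "(\<psi> has_real_derivative pd b (pd a f) ((x + \<xi> *\<^sub>R ua) + t *\<^sub>R ub)) (at t)" if "0 \<le> t" "t \<le> h" for t
  proof -
    have p: "(x + \<xi> *\<^sub>R ua) + t *\<^sub>R ub \<in> U" using inU[of \<xi> t] that \<xi> by simp
    show ?thesis unfolding \<psi>_def ub_def
      by (rule pd_along_axis) (use dpa p in \<open>simp add: ub_def\<close>)
  qed
  then obtain \<eta> where \<eta>: "0 < \<eta>" "\<eta> < h" "\<psi> h - \<psi> 0 = (h - 0) * pd b (pd a f) ((x + \<xi> *\<^sub>R ua) + \<eta> *\<^sub>R ub)"
    using MVT2[of 0 h \<psi> "\<lambda>t. pd b (pd a f) ((x + \<xi> *\<^sub>R ua) + t *\<^sub>R ub)"] h by auto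
  have "\<phi>' \<xi> = \<psi> h - \<psi> 0" by (simp add: \<phi>'_def \<psi>_def add_ac)
  moreover have "\<phi> h - \<phi> 0 = f (x + h *\<^sub>R ua + h *\<^sub>R ub) - f (x + h *\<^sub>R ua) - f (x + h *\<^sub>R ub) + f x"
    by (simp add: \<phi>_def add_ac)
  ultimately show ?thesis using \<xi> \<eta> unfolding ua_def ub_def by (intro exI[of _ \<xi>] exI[of _ \<eta>]) auto
qed

text \<open>Schwarz's theorem: both mixed partials are values of the same second difference quotient
  at nearby points, and they are continuous.\<close>

lemma pd_commute:
  fixes f :: "real^'n::finite \<Rightarrow> real"
  assumes U: "open U" and x: "x \<in> U" and sm: "smooth_on_chart U f"
  shows "pd i (pd j f) x = pd j (pd i f) x"
proof (rule ccontr)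
  assume ne: "pd i (pd j f) x \<noteq> pd j (pd i f) x"
  obtain \<epsilon> where \<epsilon>: "\<epsilon> > 0" "ball x \<epsilon> \<subseteq> U" using U x open_contains_ball by blast
  define A where "A = pd j (pd i f) x"
  define B where "B = pd i (pd j f) x"
  define e where "e = \<bar>A - B\<bar> / 2"
  have e: "e > 0" using ne by (simp add: e_def A_def B_def)
  have c1: "isCont (pd j (pd i f)) x"
    by (rule differentiable_imp_continuous_within[OF smooth_on_chart_differentiable[OF smooth_on_chart_pd[OF smooth_on_chart_pd[OF sm]] x]])
  have c2: "isCont (pd i (pd j f)) x"
    by (rule differentiable_imp_continuous_within[OF smooth_on_chart_differentiable[OF smooth_on_chart_pd[OF smooth_on_chart_pd[OF sm]] x]])
  obtain d1 where d1: "d1 > 0" "\<And>y. dist y x < d1 \<Longrightarrow> dist (pd j (pd i f) y) A < e"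
    using c1 e unfolding continuous_at_eps_delta A_def by blast
  obtain d2 where d2: "d2 > 0" "\<And>y. dist y x < d2 \<Longrightarrow> dist (pd i (pd j f) y) B < e"
    using c2 e unfolding continuous_at_eps_delta B_def by blast
  define h where "h = min \<epsilon> (min d1 d2) / 4"
  have h: "0 < h" "2 * h < \<epsilon>" "2 * h < d1" "2 * h < d2" using \<epsilon> d1 d2 by (auto simp: h_def)
  obtain \<xi> \<eta> where xe: "0 < \<xi>" "\<xi> < h" "0 < \<eta>" "\<eta> < h"
    "f (x + h *\<^sub>R axis i 1 + h *\<^sub>R axis j 1) - f (x + h *\<^sub>R axis i 1) - f (x + h *\<^sub>R axis j 1) + f x
      = h * (h * pd j (pd i f) (x + \<xi> *\<^sub>R axis i 1 + \<eta> *\<^sub>R axis j 1))"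
    using second_difference_mean_value[OF \<epsilon>(2) sm h(1,2), of i j] by blast
  obtain \<xi>' \<eta>' where xe': "0 < \<xi>'" "\<xi>' < h" "0 < \<eta>'" "\<eta>' < h"
    "f (x + h *\<^sub>R axis j 1 + h *\<^sub>R axis i 1) - f (x + h *\<^sub>R axis j 1) - f (x + h *\<^sub>R axis i 1) + f x
      = h * (h * pd i (pd j f) (x + \<xi>' *\<^sub>R axis j 1 + \<eta>' *\<^sub>R axis i 1))"
    using second_difference_mean_value[OF \<epsilon>(2) sm h(1,2), of j i] by blast
  have dist2: "dist (x + s *\<^sub>R axis a 1 + t *\<^sub>R axis b 1) x < 2 * h"
    if "0 < s" "s < h" "0 < t" "t < h" for s t and a b :: 'n
    using dist_add_axes[of s t x a b] that by simp
  have "f (x + h *\<^sub>R axis j 1 + h *\<^sub>R axis i 1) = f (x + h *\<^sub>R axis i 1 + h *\<^sub>R axis j 1)"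
    by (simp add: add_ac)
  then have "h * (h * pd j (pd i f) (x + \<xi> *\<^sub>R axis i 1 + \<eta> *\<^sub>R axis j 1)) = h * (h * pd i (pd j f) (x + \<xi>' *\<^sub>R axis j 1 + \<eta>' *\<^sub>R axis i 1))"
    using xe(5) xe'(5) by linarith
  then have eq: "pd j (pd i f) (x + \<xi> *\<^sub>R axis i 1 + \<eta> *\<^sub>R axis j 1) = pd i (pd j f) (x + \<xi>' *\<^sub>R axis j 1 + \<eta>' *\<^sub>R axis i 1)"
    using h(1) by simp
  have "dist (pd j (pd i f) (x + \<xi> *\<^sub>R axis i 1 + \<eta> *\<^sub>R axis j 1)) A < e"
    using d1(2) dist2[OF xe(1-4), of i j] h by force
  moreover have "dist (pd i (pd j f) (x + \<xi>' *\<^sub>R axis j 1 + \<eta>' *\<^sub>R axis i 1)) B < e"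
    using d2(2) dist2[OF xe'(1-4), of j i] h by force
  ultimately have "\<bar>A - B\<bar> < 2 * e" using eq by (simp add: dist_real_def)
  then show False by (simp add: e_def)
qed

section \<open>The Levi-Civita connection in a chart\<close>

lemma matrix_inv_mult:
  fixes M :: "real^'n::finite^'n"
  assumes "det M \<noteq> 0"
  shows "M ** matrix_inv M = mat 1" "matrix_inv M ** M = mat 1"
proof -
  have "\<exists>A'. M ** A' = mat 1 \<and> A' ** M = mat 1"
    using assms invertible_det_nz[of M] unfolding invertible_def by blast
  then have "M ** matrix_inv M = mat 1 \<and> matrix_inv M ** M = mat 1"
    unfolding matrix_inv_def by (rule someI_ex)
  then show "M ** matrix_inv M = mat 1" "matrix_inv M ** M = mat 1" by auto
qed

lemma det_differentiable:
  fixes E :: "real^'n \<Rightarrow> 'n \<Rightarrow> 'n \<Rightarrow> real"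
  assumes "\<And>i j. (\<lambda>y. E y i j) differentiable (at x)"
  shows "(\<lambda>y. det (\<chi> i j. E y i j)) differentiable (at x)"
  unfolding det_def
  by (intro differentiable_sum ballI differentiable_mult differentiable_const differentiable_prod)
     (simp_all add: assms)

lemma sum_split_at:
  assumes "finite A" "j \<in> A"
  shows "(\<Sum>m\<in>A. f m) = f j + (\<Sum>m\<in>A. if m = j then 0 else f m)"
proof -
  have "(\<Sum>m\<in>A. f m) = (\<Sum>m\<in>A. (if m = j then f m else 0) + (if m = j then 0 else f m))"
    by (rule sum.cong) auto
  also have "\<dots> = f j + (\<Sum>m\<in>A. if m = j then 0 else f m)"
    using assms by (simp add: sum.distrib)
  finally show ?thesis .
qed

lemma sum_swap_pairs:
  assumes "finite A" "finite B"
  shows "(\<Sum>j\<in>A. \<Sum>p\<in>B. \<Sum>m\<in>A. \<Sum>q\<in>B. F j p m q) = (\<Sum>j\<in>A. \<Sum>p\<in>B. \<Sum>m\<in>A. \<Sum>q\<in>B. (F m q j p :: real))"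
proof -
  have o: "(\<Sum>j\<in>A. \<Sum>p\<in>B. K j p) = (\<Sum>u\<in>A\<times>B. K (fst u) (snd u))" for K :: "'a \<Rightarrow> 'b \<Rightarrow> real"
    by (simp add: sum.cartesian_product split_def)
  have e: "(\<Sum>j\<in>A. \<Sum>p\<in>B. \<Sum>m\<in>A. \<Sum>q\<in>B. H j p m q) = (\<Sum>u\<in>A\<times>B. \<Sum>v\<in>A\<times>B. H (fst u) (snd u) (fst v) (snd v))" for H :: "'a \<Rightarrow> 'b \<Rightarrow> 'a \<Rightarrow> 'b \<Rightarrow> real"
  proof -
    have "(\<Sum>j\<in>A. \<Sum>p\<in>B. \<Sum>m\<in>A. \<Sum>q\<in>B. H j p m q) = (\<Sum>j\<in>A. \<Sum>p\<in>B. \<Sum>v\<in>A\<times>B. H j p (fst v) (snd v))"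
      by (intro sum.cong refl) (simp add: sum.cartesian_product split_def)
    also have "\<dots> = (\<Sum>u\<in>A\<times>B. \<Sum>v\<in>A\<times>B. H (fst u) (snd u) (fst v) (snd v))"
      by (rule o[of "\<lambda>j p. \<Sum>v\<in>A\<times>B. H j p (fst v) (snd v)"])
    finally show ?thesis .
  qed
  have "(\<Sum>u\<in>A\<times>B. \<Sum>v\<in>A\<times>B. F (fst u) (snd u) (fst v) (snd v)) = (\<Sum>v\<in>A\<times>B. \<Sum>u\<in>A\<times>B. F (fst u) (snd u) (fst v) (snd v))"
    by (rule sum.swap)
  then show ?thesis unfolding e by simp
qed

lemma sum_list_update_mset_cong:
  fixes F :: "'a list \<Rightarrow> real"
  assumes L: "length L = k" and m: "mset L = mset L'"
    and F: "\<And>M M'. length M = k \<Longrightarrow> mset M = mset M' \<Longrightarrow> F M = F M'"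
  shows "(\<Sum>j<k. \<Sum>p\<in>UNIV. c (L!j) p * F (L[j:=p])) = (\<Sum>j<k. \<Sum>p\<in>UNIV. c (L'!j) p * F (L'[j:=p]))"
proof -
  define Fm where "Fm M = F (SOME l. mset l = M)" for M
  have FFm: "F M = Fm (mset M)" if "length M = k" for M
    unfolding Fm_def by (rule F[OF that]) (auto intro: someI[of "\<lambda>l. mset l = mset M" M, symmetric])
  have L': "length L' = k" using L m by (metis mset_eq_length)
  define \<psi> where "\<psi> a = (\<Sum>p\<in>UNIV. c a p * Fm (add_mset p (mset L - {#a#})))" for a
  have e: "(\<Sum>j<k. \<Sum>p\<in>UNIV. c (l!j) p * F (l[j:=p])) = (\<Sum>j<length l. \<psi> (l!j))"
    if "length l = k" "mset l = mset L" for l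
    unfolding \<psi>_def
  proof (intro sum.cong refl)
    fix j p assume j: "j \<in> {..<length l}"
    have "F (l[j:=p]) = Fm (mset (l[j:=p]))" by (rule FFm) (simp add: that)
    also have "mset (l[j:=p]) = add_mset p (mset L - {#l!j#})"
      using j that(2) by (simp add: mset_update)
    finally show "c (l!j) p * F (l[j:=p]) = c (l!j) p * Fm (add_mset p (mset L - {#l!j#}))" by simp
  qed (use that in simp)
  show ?thesis
    using e[OF L refl] e[OF L' m[symmetric]] sum_nth_eq_sum_mset[of \<psi> L] sum_nth_eq_sum_mset[of \<psi> L'] m by simp
qed

locale pseudo_riemannian_chart =
  fixes U :: "(real^'n::finite) set" and g :: "real^'n \<Rightarrow> 'n \<Rightarrow> 'n \<Rightarrow> real"
  assumes pseudo_riemannian: "pseudo_riemannian U g"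
begin

lemma open_U: "open U" using pseudo_riemannian by (simp add: pseudo_riemannian_def)
lemma g_sym: "y \<in> U \<Longrightarrow> g y a b = g y b a" using pseudo_riemannian by (simp add: pseudo_riemannian_def)
lemma g_det: "y \<in> U \<Longrightarrow> det (metric_matrix g y) \<noteq> 0" using pseudo_riemannian by (simp add: pseudo_riemannian_def)
lemma g_smooth: "smooth_on_chart U (\<lambda>y. g y a b)" using pseudo_riemannian by (simp add: pseudo_riemannian_def)

lemma g_ginv: "y \<in> U \<Longrightarrow> (\<Sum>e\<in>UNIV. g y a e * ginv g y e b) = (if a = b then 1 else 0)"
proof -
  assume y: "y \<in> U"
  have "(metric_matrix g y ** matrix_inv (metric_matrix g y)) $ a $ b = mat 1 $ a $ b"
    using matrix_inv_mult(1)[OF g_det[OF y]] by simp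
  then show ?thesis
    by (simp add: matrix_matrix_mult_def mat_def ginv_def metric_matrix_def)
qed

lemma ginv_sym: "y \<in> U \<Longrightarrow> ginv g y a b = ginv g y b a"
proof -
  assume y: "y \<in> U"
  define M where "M = metric_matrix g y"
  define B where "B = matrix_inv M"
  have MT: "transpose M = M"
    using g_sym[OF y] by (simp add: M_def metric_matrix_def transpose_def vec_eq_iff)
  have MB: "M ** B = mat 1" and BM: "B ** M = mat 1"
    using matrix_inv_mult[OF g_det[OF y]] by (simp_all add: M_def B_def)
  have "transpose B ** M = mat 1"
    using arg_cong[OF MB, of transpose] by (simp add: matrix_transpose_mul MT transpose_mat)
  then have "B = transpose B"
    by (metis BM MB matrix_mul_assoc matrix_mul_lid matrix_mul_rid)
  then have "B $ a $ b = transpose B $ a $ b" by simp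
  then show ?thesis by (simp add: ginv_def B_def M_def transpose_def)
qed

lemma ginv_cramer:
  assumes y: "y \<in> U"
  shows "ginv g y a b = det (\<chi> i j. if j = a then (if i = b then 1 else 0) else g y i j) / det (metric_matrix g y)"
proof -
  define B where "B = matrix_inv (metric_matrix g y)"
  have MB: "metric_matrix g y ** B = mat 1" using matrix_inv_mult[OF g_det[OF y]] by (simp add: B_def)
  have "metric_matrix g y *v (B *v axis b 1) = axis b 1"
    by (simp add: matrix_vector_mul_assoc MB)
  then have "B *v axis b 1 = (\<chi> k. det (\<chi> i j. if j = k then axis b 1 $ i else metric_matrix g y $ i $ j) / det (metric_matrix g y))"
    by (subst (asm) cramer[OF g_det[OF y]])
  then have "(B *v axis b 1) $ a = det (\<chi> i j. if j = a then axis b 1 $ i else metric_matrix g y $ i $ j) / det (metric_matrix g y)"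
    by simp
  moreover have "(B *v axis b 1) $ a = B $ a $ b"
    by (simp add: matrix_vector_mult_def axis_def if_distrib[of "\<lambda>x. _ * x"] cong: if_cong)
  moreover have "(\<chi> i j. if j = a then axis b 1 $ i else metric_matrix g y $ i $ j)
      = (\<chi> i j. if j = a then (if i = b then 1 else 0) else g y i j :: real^'n^'n)"
    by (simp add: vec_eq_iff axis_def metric_matrix_def)
  ultimately show ?thesis
    by (simp add: ginv_def B_def)
qed

lemma ginv_differentiable: "x \<in> U \<Longrightarrow> (\<lambda>y. ginv g y a b) differentiable (at x)"
proof -
  assume x: "x \<in> U"
  have dg: "(\<lambda>y. g y i j) differentiable (at x)" for i j using smooth_on_chart_differentiable[OF g_smooth x] .
  have D: "(\<lambda>y. det (\<chi> i j. if j = a then (if i = b then 1 else 0) else g y i j) / det (metric_matrix g y)) differentiable (at x)"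
    unfolding metric_matrix_def
  proof (intro differentiable_divide det_differentiable)
    show "(\<lambda>y. if j = a then if i = b then 1 else 0 else g y i j) differentiable (at x)" for i j
      by (cases "j = a") (simp_all add: dg)
    show "(\<lambda>y. g y i j) differentiable (at x)" for i j
      by (rule dg)
    show "det (\<chi> i j. g x i j) \<noteq> 0" using g_det[OF x] by (simp add: metric_matrix_def)
  qed
  show ?thesis
    by (rule differentiable_cong_open[OF open_U x _ D]) (simp add: ginv_cramer)
qed

lemma Gamma_differentiable: "x \<in> U \<Longrightarrow> (\<lambda>y. Gamma g y c a b) differentiable (at x)"
proof -
  assume x: "x \<in> U"
  have d1: "(\<lambda>y. pd i (\<lambda>z. g z k l) y) differentiable (at x)" for i k l
    using smooth_on_chart_differentiable[OF smooth_on_chart_pd[OF g_smooth] x] .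
  show ?thesis
    unfolding Gamma_def
    by (intro differentiable_mult differentiable_const differentiable_sum ballI differentiable_add differentiable_diff
        ginv_differentiable[OF x] d1) auto
qed

lemma Gamma_sym: "y \<in> U \<Longrightarrow> Gamma g y c a b = Gamma g y c b a"
proof -
  assume y: "y \<in> U"
  have "pd d (\<lambda>y. g y a b) y = pd d (\<lambda>y. g y b a) y" for d
    by (rule pd_cong_open[OF open_U y]) (simp add: g_sym)
  then show ?thesis unfolding Gamma_def by (simp add: add_ac)
qed

lemma pd_cov_Cons:
  fixes T :: "real^'n \<Rightarrow> 'n list \<Rightarrow> real"
  assumes x: "x \<in> U" and sm: "\<And>L. length L = k \<Longrightarrow> smooth_on_chart U (\<lambda>y. T y L)" and lc: "length cs = k"
  shows "pd a (\<lambda>y. cov g T y (b # cs)) x = pd a (pd b (\<lambda>z. T z cs)) x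
      - (\<Sum>i<k. \<Sum>p\<in>UNIV. Gamma g x p b (cs!i) * pd a (\<lambda>z. T z (cs[i:=p])) x)
      - (\<Sum>i<k. \<Sum>p\<in>UNIV. pd a (\<lambda>y. Gamma g y p b (cs!i)) x * T x (cs[i:=p]))"
proof -
  have dT: "(\<lambda>y. T y L) differentiable (at x)" if "length L = k" for L using smooth_on_chart_differentiable[OF sm[OF that] x] .
  have dpT: "pd c (\<lambda>y. T y L) differentiable (at x)" if "length L = k" for L c
    using smooth_on_chart_differentiable[OF smooth_on_chart_pd[OF sm[OF that]] x] .
  have dG: "(\<lambda>y. Gamma g y p u v) differentiable (at x)" for p u v using Gamma_differentiable[OF x] .
  have cT: "cov g T y (b # cs) = pd b (\<lambda>z. T z cs) y - (\<Sum>i<k. \<Sum>p\<in>UNIV. Gamma g y p b (cs!i) * T y (cs[i:=p]))" for y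
    by (simp add: cov_def lc)
  have dprod: "(\<lambda>y. Gamma g y p b (cs!i) * T y (cs[i:=p])) differentiable (at x)" for i p
    by (intro differentiable_mult dG dT) (simp add: lc)
  have "pd a (\<lambda>y. cov g T y (b # cs)) x = pd a (\<lambda>y. pd b (\<lambda>z. T z cs) y - (\<Sum>i<k. \<Sum>p\<in>UNIV. Gamma g y p b (cs!i) * T y (cs[i:=p]))) x"
    by (simp only: cT)
  also have "\<dots> = pd a (pd b (\<lambda>z. T z cs)) x - pd a (\<lambda>y. \<Sum>i<k. \<Sum>p\<in>UNIV. Gamma g y p b (cs!i) * T y (cs[i:=p])) x"
    by (rule pd_diff) (auto intro!: dpT differentiable_sum dprod simp: lc)
  also have "pd a (\<lambda>y. \<Sum>i<k. \<Sum>p\<in>UNIV. Gamma g y p b (cs!i) * T y (cs[i:=p])) x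
      = (\<Sum>i<k. pd a (\<lambda>y. \<Sum>p\<in>UNIV. Gamma g y p b (cs!i) * T y (cs[i:=p])) x)"
    by (rule pd_sum) (auto intro!: differentiable_sum dprod)
  also have "\<dots> = (\<Sum>i<k. \<Sum>p\<in>UNIV. pd a (\<lambda>y. Gamma g y p b (cs!i) * T y (cs[i:=p])) x)"
    by (intro sum.cong refl pd_sum) (auto intro: dprod)
  also have "\<dots> = (\<Sum>i<k. \<Sum>p\<in>UNIV. Gamma g x p b (cs!i) * pd a (\<lambda>z. T z (cs[i:=p])) x
      + pd a (\<lambda>y. Gamma g y p b (cs!i)) x * T x (cs[i:=p]))"
    by (intro sum.cong refl pd_mult dG dT) (simp add: lc)
  finally show ?thesis by (simp add: sum.distrib)
qed

lemma mult_cov_Cons_list_update: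
  assumes lc: "length cs = k" and j: "j < k"
  shows "c * cov g T x (b # cs[j:=p])
      = c * pd b (\<lambda>z. T z (cs[j:=p])) x
      - (\<Sum>q\<in>UNIV. c * (Gamma g x q b p * T x (cs[j:=q])))
      - (\<Sum>m<k. \<Sum>q\<in>UNIV. if m = j then 0 else c * (Gamma g x q b (cs!m) * T x (cs[j:=p, m:=q])))"
proof -
  have "cov g T x (b # cs[j:=p]) = pd b (\<lambda>z. T z (cs[j:=p])) x
      - (\<Sum>m<k. \<Sum>q\<in>UNIV. Gamma g x q b (cs[j:=p]!m) * T x (cs[j:=p, m:=q]))"
    by (simp add: cov_def lc)
  also have "(\<Sum>m<k. \<Sum>q\<in>UNIV. Gamma g x q b (cs[j:=p]!m) * T x (cs[j:=p, m:=q]))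
      = (\<Sum>q\<in>UNIV. Gamma g x q b (cs[j:=p]!j) * T x (cs[j:=p, j:=q]))
      + (\<Sum>m<k. if m = j then 0 else \<Sum>q\<in>UNIV. Gamma g x q b (cs[j:=p]!m) * T x (cs[j:=p, m:=q]))"
    by (rule sum_split_at) (use j in auto)
  also have "(\<Sum>m<k. if m = j then 0 else \<Sum>q\<in>UNIV. Gamma g x q b (cs[j:=p]!m) * T x (cs[j:=p, m:=q]))
      = (\<Sum>m<k. \<Sum>q\<in>UNIV. if m = j then 0 else Gamma g x q b (cs!m) * T x (cs[j:=p, m:=q]))"
    by (rule sum.cong) auto
  finally show ?thesis
    using j lc by (simp add: right_diff_distrib distrib_left sum_distrib_left if_distrib[of "\<lambda>z. _ * z"] cong: if_cong)
qed

lemma cov_cov_expand: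
  fixes T :: "real^'n \<Rightarrow> 'n list \<Rightarrow> real"
  assumes x: "x \<in> U" and sm: "\<And>L. length L = k \<Longrightarrow> smooth_on_chart U (\<lambda>y. T y L)" and lc: "length cs = k"
  shows "cov g (cov g T) x (a # b # cs) = pd a (pd b (\<lambda>z. T z cs)) x
    - (\<Sum>i<k. \<Sum>p\<in>UNIV. Gamma g x p b (cs!i) * pd a (\<lambda>z. T z (cs[i:=p])) x)
    - (\<Sum>i<k. \<Sum>p\<in>UNIV. pd a (\<lambda>y. Gamma g y p b (cs!i)) x * T x (cs[i:=p]))
    - (\<Sum>p\<in>UNIV. Gamma g x p a b * cov g T x (p # cs))
    - (\<Sum>j<k. \<Sum>p\<in>UNIV. Gamma g x p a (cs!j) * pd b (\<lambda>z. T z (cs[j:=p])) x)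
    + (\<Sum>j<k. \<Sum>p\<in>UNIV. \<Sum>q\<in>UNIV. Gamma g x p a (cs!j) * (Gamma g x q b p * T x (cs[j:=q])))
    + (\<Sum>j<k. \<Sum>p\<in>UNIV. \<Sum>m<k. \<Sum>q\<in>UNIV. if m = j then 0 else
         Gamma g x p a (cs!j) * (Gamma g x q b (cs!m) * T x (cs[j:=p, m:=q])))"
proof -
  have outer: "cov g (cov g T) x (a # b # cs) = pd a (\<lambda>y. cov g T y (b # cs)) x
      - (\<Sum>i<Suc k. \<Sum>p\<in>UNIV. Gamma g x p a ((b#cs)!i) * cov g T x ((b#cs)[i:=p]))"
    by (simp add: cov_def lc)
  have first_slot: "(\<Sum>i<Suc k. \<Sum>p\<in>UNIV. Gamma g x p a ((b#cs)!i) * cov g T x ((b#cs)[i:=p]))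
      = (\<Sum>p\<in>UNIV. Gamma g x p a b * cov g T x (p # cs))
      + (\<Sum>j<k. \<Sum>p\<in>UNIV. Gamma g x p a (cs!j) * cov g T x (b # cs[j:=p]))"
    by (simp del: sum.lessThan_Suc add: sum.lessThan_Suc_shift)
  have other_slots: "(\<Sum>j<k. \<Sum>p\<in>UNIV. Gamma g x p a (cs!j) * cov g T x (b # cs[j:=p]))
     = (\<Sum>j<k. \<Sum>p\<in>UNIV. Gamma g x p a (cs!j) * pd b (\<lambda>z. T z (cs[j:=p])) x)
     - (\<Sum>j<k. \<Sum>p\<in>UNIV. \<Sum>q\<in>UNIV. Gamma g x p a (cs!j) * (Gamma g x q b p * T x (cs[j:=q])))
     - (\<Sum>j<k. \<Sum>p\<in>UNIV. \<Sum>m<k. \<Sum>q\<in>UNIV. if m = j then 0 else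
         Gamma g x p a (cs!j) * (Gamma g x q b (cs!m) * T x (cs[j:=p, m:=q])))"
    by (simp add: mult_cov_Cons_list_update lc sum_subtractf)
  show ?thesis using outer pd_cov_Cons[OF x sm lc] first_slot other_slots by simp
qed


lemma sum_Riem_list_update:
  "(\<Sum>i<k. \<Sum>d\<in>UNIV. Riem g x a b (cs!i) d * T x (cs[i:=d]))
     = (\<Sum>i<k. \<Sum>p\<in>UNIV. pd b (\<lambda>y. Gamma g y p a (cs!i)) x * T x (cs[i:=p]))
     - (\<Sum>i<k. \<Sum>p\<in>UNIV. pd a (\<lambda>y. Gamma g y p b (cs!i)) x * T x (cs[i:=p]))
     + (\<Sum>j<k. \<Sum>p\<in>UNIV. \<Sum>q\<in>UNIV. Gamma g x p a (cs!j) * (Gamma g x q b p * T x (cs[j:=q])))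
     - (\<Sum>j<k. \<Sum>p\<in>UNIV. \<Sum>q\<in>UNIV. Gamma g x p b (cs!j) * (Gamma g x q a p * T x (cs[j:=q])))"
proof -
  have Gamma_Gamma_reorder: "(\<Sum>d\<in>UNIV. (\<Sum>e\<in>UNIV. Gamma g x e u c * Gamma g x d v e) * T x (cs[i:=d]))
      = (\<Sum>p\<in>UNIV. \<Sum>q\<in>UNIV. Gamma g x p u c * (Gamma g x q v p * T x (cs[i:=q])))" for u v c i
  proof -
    have "(\<Sum>d\<in>UNIV. (\<Sum>e\<in>UNIV. Gamma g x e u c * Gamma g x d v e) * T x (cs[i:=d]))
       = (\<Sum>d\<in>UNIV. \<Sum>e\<in>UNIV. Gamma g x e u c * (Gamma g x d v e * T x (cs[i:=d])))"
      by (simp add: sum_distrib_right mult.assoc)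
    also have "\<dots> = (\<Sum>e\<in>UNIV. \<Sum>d\<in>UNIV. Gamma g x e u c * (Gamma g x d v e * T x (cs[i:=d])))"
      by (rule sum.swap)
    finally show ?thesis .
  qed
  have "(\<Sum>i<k. \<Sum>d\<in>UNIV. Riem g x a b (cs!i) d * T x (cs[i:=d]))
    = (\<Sum>i<k. (\<Sum>d\<in>UNIV. pd b (\<lambda>y. Gamma g y d a (cs!i)) x * T x (cs[i:=d]))
        - (\<Sum>d\<in>UNIV. pd a (\<lambda>y. Gamma g y d b (cs!i)) x * T x (cs[i:=d]))
        + (\<Sum>d\<in>UNIV. (\<Sum>e\<in>UNIV. Gamma g x e a (cs!i) * Gamma g x d b e) * T x (cs[i:=d]))
        - (\<Sum>d\<in>UNIV. (\<Sum>e\<in>UNIV. Gamma g x e b (cs!i) * Gamma g x d a e) * T x (cs[i:=d])))"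
    by (intro sum.cong refl)
       (simp add: Riem_def algebra_simps sum.distrib sum_subtractf sum_distrib_right)
  also have "\<dots> = (\<Sum>i<k. (\<Sum>d\<in>UNIV. pd b (\<lambda>y. Gamma g y d a (cs!i)) x * T x (cs[i:=d]))
        - (\<Sum>d\<in>UNIV. pd a (\<lambda>y. Gamma g y d b (cs!i)) x * T x (cs[i:=d]))
        + (\<Sum>p\<in>UNIV. \<Sum>q\<in>UNIV. Gamma g x p a (cs!i) * (Gamma g x q b p * T x (cs[i:=q])))
        - (\<Sum>p\<in>UNIV. \<Sum>q\<in>UNIV. Gamma g x p b (cs!i) * (Gamma g x q a p * T x (cs[i:=q]))))"
    by (simp only: Gamma_Gamma_reorder)
  finally show ?thesis by (simp add: sum.distrib sum_subtractf)
qed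

lemma cov_cov_commutator:
  fixes T :: "real^'n \<Rightarrow> 'n list \<Rightarrow> real"
  assumes x: "x \<in> U" and sm: "\<And>L. length L = k \<Longrightarrow> smooth_on_chart U (\<lambda>y. T y L)" and lc: "length cs = k"
  shows "cov g (cov g T) x (a # b # cs) - cov g (cov g T) x (b # a # cs)
     = (\<Sum>i<k. \<Sum>d\<in>UNIV. Riem g x a b (cs!i) d * T x (cs[i:=d]))"
proof -
  note Ea = cov_cov_expand[where T=T and k=k and a=a and b=b, OF x sm lc] and Eb = cov_cov_expand[where T=T and k=k and a=b and b=a, OF x sm lc]
  have second_partials: "pd a (pd b (\<lambda>z. T z cs)) x = pd b (pd a (\<lambda>z. T z cs)) x"
    by (rule pd_commute[OF open_U x sm[OF lc]])
  have Gamma_first: "(\<Sum>p\<in>UNIV. Gamma g x p a b * cov g T x (p # cs)) = (\<Sum>p\<in>UNIV. Gamma g x p b a * cov g T x (p # cs))"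
    using Gamma_sym[OF x] by simp
  have cross_terms: "(\<Sum>j<k. \<Sum>p\<in>UNIV. \<Sum>m<k. \<Sum>q\<in>UNIV. if m = j then 0 else
         Gamma g x p a (cs!j) * (Gamma g x q b (cs!m) * T x (cs[j:=p, m:=q])))
      = (\<Sum>j<k. \<Sum>p\<in>UNIV. \<Sum>m<k. \<Sum>q\<in>UNIV. if m = j then 0 else
         Gamma g x p b (cs!j) * (Gamma g x q a (cs!m) * T x (cs[j:=p, m:=q])))"
  proof -
    have "(\<Sum>j<k. \<Sum>p\<in>UNIV. \<Sum>m<k. \<Sum>q\<in>UNIV. if m = j then 0 else
         Gamma g x p a (cs!j) * (Gamma g x q b (cs!m) * T x (cs[j:=p, m:=q])))
      = (\<Sum>j<k. \<Sum>p\<in>UNIV. \<Sum>m<k. \<Sum>q\<in>UNIV. if j = m then 0 else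
         Gamma g x q a (cs!m) * (Gamma g x p b (cs!j) * T x (cs[m:=q, j:=p])))"
      by (rule sum_swap_pairs) auto
    also have "\<dots> = (\<Sum>j<k. \<Sum>p\<in>UNIV. \<Sum>m<k. \<Sum>q\<in>UNIV. if m = j then 0 else
         Gamma g x p b (cs!j) * (Gamma g x q a (cs!m) * T x (cs[j:=p, m:=q])))"
      by (intro sum.cong refl) (auto simp: list_update_swap)
    finally show ?thesis .
  qed
  show ?thesis
    unfolding sum_Riem_list_update using Ea Eb second_partials Gamma_first cross_terms by linarith
qed

lemma cov_mset_cong:
  fixes T :: "real^'n \<Rightarrow> 'n list \<Rightarrow> real"
  assumes FS: "\<And>y L L'. y \<in> U \<Longrightarrow> length L = k \<Longrightarrow> mset L = mset L' \<Longrightarrow> T y L = T y L'"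
    and y: "y \<in> U" and L: "length L = k" and m: "mset L = mset L'"
  shows "cov g T y (b # L) = cov g T y (b # L')"
proof -
  have L': "length L' = k" using L m by (metis mset_eq_length)
  have "pd b (\<lambda>z. T z L) y = pd b (\<lambda>z. T z L') y"
    by (rule pd_cong_open[OF open_U y]) (rule FS[OF _ L m])
  moreover have "(\<Sum>i<k. \<Sum>p\<in>UNIV. Gamma g y p b (L!i) * T y (L[i:=p]))
      = (\<Sum>i<k. \<Sum>p\<in>UNIV. Gamma g y p b (L'!i) * T y (L'[i:=p]))"
    by (rule sum_list_update_mset_cong[OF L m]) (rule FS[OF y])
  ultimately show ?thesis by (simp add: cov_def L L')
qed

lemma cov_mset_cong_tail:
  fixes T :: "real^'n \<Rightarrow> 'n list \<Rightarrow> real"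
  assumes TS: "\<And>y c L L'. y \<in> U \<Longrightarrow> length L = k \<Longrightarrow> mset L = mset L' \<Longrightarrow> T y (c # L) = T y (c # L')"
    and y: "y \<in> U" and L: "length L = k" and m: "mset L = mset L'"
  shows "cov g T y (a # b # L) = cov g T y (a # b # L')"
proof -
  have L': "length L' = k" using L m by (metis mset_eq_length)
  have "pd a (\<lambda>z. T z (b # L)) y = pd a (\<lambda>z. T z (b # L')) y"
    by (rule pd_cong_open[OF open_U y]) (rule TS[OF _ L m])
  moreover have "(\<Sum>i<Suc k. \<Sum>p\<in>UNIV. Gamma g y p a ((b#L)!i) * T y ((b#L)[i:=p]))
      = (\<Sum>i<Suc k. \<Sum>p\<in>UNIV. Gamma g y p a ((b#L')!i) * T y ((b#L')[i:=p]))"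
  proof -
    have "(\<Sum>j<k. \<Sum>p\<in>UNIV. Gamma g y p a (L!j) * (\<lambda>M. T y (b # M)) (L[j:=p]))
        = (\<Sum>j<k. \<Sum>p\<in>UNIV. Gamma g y p a (L'!j) * (\<lambda>M. T y (b # M)) (L'[j:=p]))"
      by (rule sum_list_update_mset_cong[OF L m]) (rule TS[OF y])
    moreover have "T y (p # L) = T y (p # L')" for p by (rule TS[OF y L m])
    ultimately show ?thesis by (simp del: sum.lessThan_Suc add: sum.lessThan_Suc_shift)
  qed
  ultimately show ?thesis by (simp add: cov_def L L')
qed

lemma Riem_antisym: "Riem g x b a c d = - Riem g x a b c d"
  by (simp add: Riem_def sum_subtractf algebra_simps)

lemma Riem_bianchi:
  assumes x: "x \<in> U"
  shows "Riem g x a b c d + Riem g x b c a d + Riem g x c a b d = 0"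
proof -
  have gs: "Gamma g y p u v = Gamma g y p v u" if "y \<in> U" for y p u v using Gamma_sym[OF that] .
  have ps: "pd w (\<lambda>y. Gamma g y p u v) x = pd w (\<lambda>y. Gamma g y p v u) x" for w p u v
    by (rule pd_cong_open[OF open_U x]) (rule gs)
  have s1: "Gamma g x e c a = Gamma g x e a c" for e using gs[OF x] .
  have s2: "Gamma g x e b a = Gamma g x e a b" for e using gs[OF x] .
  have s3: "Gamma g x e c b = Gamma g x e b c" for e using gs[OF x] .
  show ?thesis
    unfolding Riem_def
    using ps[of b d a c] ps[of c d b a] ps[of a d c b]
    by (simp add: s1 s2 s3 sum_subtractf)
qed


lemma Gamma_lower:
  assumes y: "y \<in> U"
  shows "(\<Sum>p\<in>UNIV. Gamma g y p b c * g y p d)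
     = (1/2) * (pd b (\<lambda>z. g z d c) y + pd c (\<lambda>z. g z d b) y - pd d (\<lambda>z. g z b c) y)"
proof -
  define Q where "Q e = pd b (\<lambda>z. g z e c) y + pd c (\<lambda>z. g z e b) y - pd e (\<lambda>z. g z b c) y" for e
  have "(\<Sum>p\<in>UNIV. Gamma g y p b c * g y p d) = (\<Sum>p\<in>UNIV. \<Sum>e\<in>UNIV. (1/2) * (g y d p * ginv g y p e * Q e))"
    by (simp add: Gamma_def Q_def sum_distrib_left sum_distrib_right g_sym[OF y, of _ d] algebra_simps)
  also have "\<dots> = (\<Sum>e\<in>UNIV. \<Sum>p\<in>UNIV. (1/2) * (g y d p * ginv g y p e * Q e))"
    by (rule sum.swap)
  also have "\<dots> = (\<Sum>e\<in>UNIV. (1/2) * ((\<Sum>p\<in>UNIV. g y d p * ginv g y p e) * Q e))"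
    by (simp add: sum_distrib_left sum_distrib_right)
  also have "\<dots> = (\<Sum>e\<in>UNIV. (1/2) * ((if d = e then 1 else 0) * Q e))"
    by (simp only: g_ginv[OF y])
  also have "\<dots> = (\<Sum>e\<in>UNIV. if d = e then (1/2) * Q e else 0)"
    by (rule sum.cong) auto
  also have "\<dots> = (1/2) * Q d" by simp
  finally show ?thesis by (simp add: Q_def)
qed

lemma cov_metric:
  assumes y: "y \<in> U" and L: "length L = 3"
  shows "cov g (\<lambda>y L. g y (L!0) (L!1)) y L = 0"
proof -
  obtain b c d where Lf: "L = [b, c, d]" using L
    by (cases L; cases "tl L"; cases "tl (tl L)") (auto simp: numeral_3_eq_3)
  define P where "P u v w = pd u (\<lambda>z. g z v w) y" for u v w
  have Ps: "P u v w = P u w v" for u v w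
    unfolding P_def by (rule pd_cong_open[OF open_U y]) (simp add: g_sym)
  have c1: "(\<Sum>p\<in>UNIV. Gamma g y p b c * g y p d) = (1/2) * (P b d c + P c d b - P d b c)"
    using Gamma_lower[OF y] by (simp add: P_def)
  have c2: "(\<Sum>p\<in>UNIV. Gamma g y p b d * g y c p) = (1/2) * (P b c d + P d c b - P c b d)"
    using Gamma_lower[OF y, of b d c] g_sym[OF y, of c] by (simp add: P_def)
  have "cov g (\<lambda>y L. g y (L!0) (L!1)) y L = P b c d - (\<Sum>p\<in>UNIV. Gamma g y p b c * g y p d)
      - (\<Sum>p\<in>UNIV. Gamma g y p b d * g y c p)"
    by (simp add: cov_def Lf P_def numeral_2_eq_2)
  also have "\<dots> = 0" unfolding c1 c2 using Ps[of b d c] Ps[of c d b] Ps[of d b c] by (simp add: field_simps)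
  finally show ?thesis .
qed

lemma Riem_lower_antisym:
  assumes x: "x \<in> U"
  shows "(\<Sum>e\<in>UNIV. Riem g x a b c e * g x e d) + (\<Sum>e\<in>UNIV. Riem g x a b d e * g x e c) = 0"
proof -
  define G where "G y L = g y (L!0) (L!1)" for y and L :: "'n list"
  have smG: "smooth_on_chart U (\<lambda>y. G y L)" if "length L = 2" for L
    unfolding G_def by (rule g_smooth)
  have z: "cov g (cov g G) x (a # b # [c, d]) = 0" for a b
  proof -
    have "pd a (\<lambda>y. cov g G y (b # [c, d])) x = pd a (\<lambda>y. 0) x"
      unfolding G_def[abs_def] by (rule pd_cong_open[OF open_U x]) (rule cov_metric, simp_all)
    moreover have c0: "cov g G x M = 0" if "length M = 3" for M
      unfolding G_def[abs_def] by (rule cov_metric[OF x that])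
    moreover have "cov g (cov g G) x (a # [b, c, d]) = pd a (\<lambda>y. cov g G y [b, c, d]) x
       - (\<Sum>i<3. \<Sum>p\<in>UNIV. Gamma g x p a ([b,c,d]!i) * cov g G x ([b,c,d][i:=p]))"
      unfolding cov_def[of g "cov g G" x] by (simp add: numeral_3_eq_3 del: list_update.simps)
    ultimately show ?thesis by (simp add: pd_const del: list_update.simps)
  qed
  have "cov g (cov g G) x (a # b # [c, d]) - cov g (cov g G) x (b # a # [c, d])
      = (\<Sum>i<2. \<Sum>e\<in>UNIV. Riem g x a b ([c,d]!i) e * G x ([c,d][i:=e]))"
    by (rule cov_cov_commutator[where T=G and k=2 and cs="[c,d]" and a=a and b=b, OF x smG]) simp_all
  then have "0 = (\<Sum>i<2. \<Sum>e\<in>UNIV. Riem g x a b ([c,d]!i) e * G x ([c,d][i:=e]))"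
    using z by simp
  then show ?thesis
    by (simp add: G_def numeral_2_eq_2 g_sym[OF x, of c])
qed

lemma Riem_lower_raise:
  assumes x: "x \<in> U"
  shows "(\<Sum>e\<in>UNIV. (\<Sum>d'\<in>UNIV. Riem g x a b c d' * g x d' e) * ginv g x e d) = Riem g x a b c d"
proof -
  have "(\<Sum>e\<in>UNIV. (\<Sum>d'\<in>UNIV. Riem g x a b c d' * g x d' e) * ginv g x e d)
      = (\<Sum>e\<in>UNIV. \<Sum>d'\<in>UNIV. Riem g x a b c d' * g x d' e * ginv g x e d)"
    by (simp add: sum_distrib_right)
  also have "\<dots> = (\<Sum>d'\<in>UNIV. \<Sum>e\<in>UNIV. Riem g x a b c d' * g x d' e * ginv g x e d)"
    by (rule sum.swap)
  also have "\<dots> = (\<Sum>d'\<in>UNIV. Riem g x a b c d' * (\<Sum>e\<in>UNIV. g x d' e * ginv g x e d))"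
    by (simp add: sum_distrib_left mult.assoc)
  also have "\<dots> = (\<Sum>d'\<in>UNIV. if d' = d then Riem g x a b c d' else 0)"
    by (rule sum.cong) (auto simp: g_ginv[OF x])
  also have "\<dots> = Riem g x a b c d" by simp
  finally show ?thesis .
qed

lemma Riem_lower_bianchi:
  assumes x: "x \<in> U"
  shows "(\<Sum>e\<in>UNIV. Riem g x a b c e * g x e d) + (\<Sum>e\<in>UNIV. Riem g x b c a e * g x e d)
      + (\<Sum>e\<in>UNIV. Riem g x c a b e * g x e d) = 0"
proof -
  have "(\<Sum>e\<in>UNIV. Riem g x a b c e * g x e d) + (\<Sum>e\<in>UNIV. Riem g x b c a e * g x e d)
      + (\<Sum>e\<in>UNIV. Riem g x c a b e * g x e d)
      = (\<Sum>e\<in>UNIV. (Riem g x a b c e + Riem g x b c a e + Riem g x c a b e) * g x e d)"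
    by (simp add: sum.distrib distrib_right)
  also have "\<dots> = 0" by (simp add: Riem_bianchi[OF x])
  finally show ?thesis .
qed

lemma ricci_algebra_at:
  fixes X :: "real^'n \<Rightarrow> 'n list \<Rightarrow> real"
  assumes n1: "n \<ge> 1"
    and smX: "\<forall>as. length as = n \<longrightarrow> smooth_on_chart U (\<lambda>y. X y as)"
    and ts: "totally_symmetric U n X" and x: "x \<in> U"
  shows "ricci_algebra n (cov g (cov g X) x) (X x) (Riem g x) (Rup g x)
    (\<lambda>a b c e. \<Sum>d\<in>UNIV. Riem g x a b c d * g x d e) (ginv g x)"
proof (unfold_locales)
  show "n \<ge> 1" by (rule n1)
next
  fix a b :: 'n and L L' :: "'n list" assume L: "length L = n" and m: "mset L = mset L'"
  have TS: "cov g X y (c # M) = cov g X y (c # M')" if "y \<in> U" "length M = n" "mset M = mset M'" for y c M M'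
    by (rule cov_mset_cong[where T=X and k=n]) (use totally_symmetric_mset_eq[OF ts] that in auto)
  show "cov g (cov g X) x (a # b # L) = cov g (cov g X) x (a # b # L')"
    by (rule cov_mset_cong_tail[where T="cov g X" and k=n]) (use TS x L m in auto)
next
  fix L L' :: "'n list" assume "length L = n" "mset L = mset L'"
  then show "X x L = X x L'" by (rule totally_symmetric_mset_eq[OF ts x])
next
  fix a b and cs :: "'n list" assume lc: "length cs = n"
  show "cov g (cov g X) x (a # b # cs) - cov g (cov g X) x (b # a # cs)
      = (\<Sum>i<n. \<Sum>d\<in>UNIV. Riem g x a b (cs ! i) d * X x (cs[i := d]))"
    by (rule cov_cov_commutator[where T=X and k=n, OF x _ lc]) (use smX in auto)
next
  fix a b c d
  show "Riem g x a b c d = (\<Sum>e\<in>UNIV. (\<Sum>d\<in>UNIV. Riem g x a b c d * g x d e) * ginv g x e d)"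
    by (rule Riem_lower_raise[OF x, symmetric])
next
  fix p a b c
  show "Rup g x p a b c = (\<Sum>q\<in>UNIV. ginv g x p q * (\<Sum>d\<in>UNIV. Riem g x q a b d * g x d c))"
    by (simp add: Rup_def sum_distrib_left mult.assoc)
next
  fix a b show "ginv g x a b = ginv g x b a" by (rule ginv_sym[OF x])
next
  fix a b c d
  show "(\<Sum>e\<in>UNIV. Riem g x b a c e * g x e d) = - (\<Sum>e\<in>UNIV. Riem g x a b c e * g x e d)"
    by (simp add: Riem_antisym[of x b a c] sum_negf)
next
  fix a b c d
  show "(\<Sum>e\<in>UNIV. Riem g x a b d e * g x e c) = - (\<Sum>e\<in>UNIV. Riem g x a b c e * g x e d)"
    using Riem_lower_antisym[OF x, of a b c d] by linarith
next
  fix a b c d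
  show "(\<Sum>e\<in>UNIV. Riem g x a b c e * g x e d) + (\<Sum>e\<in>UNIV. Riem g x b c a e * g x e d)
      + (\<Sum>e\<in>UNIV. Riem g x c a b e * g x e d) = 0"
    by (rule Riem_lower_bianchi[OF x])
qed

lemma affine_tensor_iff_second_derivative_formula:
  fixes X :: "real^'n \<Rightarrow> 'n list \<Rightarrow> real"
  assumes "n \<ge> 1"
    and "\<forall>as. length as = n \<longrightarrow> smooth_on_chart U (\<lambda>y. X y as)"
    and "totally_symmetric U n X"
  shows "affine_tensor U g n X \<longleftrightarrow> (\<forall>x\<in>U. \<forall>r s as. length as = n \<longrightarrow>
    cov g (cov g X) x (r # s # as) = second_derivative_formula n (cov g (cov g X) x) (X x) (Rup g x) r s as)"
proof -
  have "(\<forall>b cs. length cs = n + 1 \<longrightarrow> symm (\<lambda>l. cov g (cov g X) x (b # l)) cs = 0) \<longleftrightarrow>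
      (\<forall>r s as. length as = n \<longrightarrow>
        cov g (cov g X) x (r # s # as) = second_derivative_formula n (cov g (cov g X) x) (X x) (Rup g x) r s as)"
    if x: "x \<in> U" for x
  proof -
    interpret ricci_algebra n "cov g (cov g X) x" "X x" "Riem g x" "Rup g x"
      "\<lambda>a b c e. \<Sum>d\<in>UNIV. Riem g x a b c d * g x d e" "ginv g x"
      by (rule ricci_algebra_at[OF assms x])
    show ?thesis
      using affine_imp_second_derivative_formula second_derivative_formula_imp_affine by auto
  qed
  then show ?thesis by (auto simp: affine_tensor_def)
qed

end

theorem theorem2:
  fixes U :: "(real^'n::finite) set"
    and g :: "real^'n \<Rightarrow> 'n \<Rightarrow> 'n \<Rightarrow> real"
    and X :: "real^'n \<Rightarrow> 'n list \<Rightarrow> real"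
    and n :: nat
  assumes "n \<ge> 1"
    and "pseudo_riemannian U g"
    and "\<forall>as. length as = n \<longrightarrow> smooth_on_chart U (\<lambda>y. X y as)"
    and "totally_symmetric U n X"
  shows "affine_tensor U g n X \<longleftrightarrow>
    (\<forall>x\<in>U. \<forall>r s as. length as = n \<longrightarrow>
      cov g (cov g X) x (r # s # as) =
        (2 * real n / (real n + 1)) *
          symm (\<lambda>l. \<Sum>p\<in>UNIV. Rup g x p r s (l ! 0) * X x (tl l @ [p])) as
      + (real n * (real n - 1) / (real n + 1)) *
          ( symm (\<lambda>l. cov g (cov g X) x (l ! 0 # l ! 1 # drop 2 l @ [s, r])) as
          - symm (\<lambda>l. cov g (cov g X) x (s # l ! 0 # tl l @ [r])) as )
      + (real n * (real n - 1) / (real n + 1)) *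
          ( symm (\<lambda>l. \<Sum>p\<in>UNIV. Rup g x p (l ! 0) s r * X x (tl l @ [p])) as
          - 2 * symm (\<lambda>l. (1/2) * (\<Sum>p\<in>UNIV. Rup g x p (l ! 0) (l ! 1) r * X x (s # drop 2 l @ [p])
                                   + Rup g x p (l ! 0) (l ! 1) s * X x (r # drop 2 l @ [p]))) as ))"
proof -
  interpret pseudo_riemannian_chart U g
    by (rule pseudo_riemannian_chart.intro) (rule assms(2))
  show ?thesis
    using affine_tensor_iff_second_derivative_formula[OF assms(1,3,4)]
    unfolding second_derivative_formula_def .
qed

end
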